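(* Let $G$ be a connected affine algebraic group acting on an affine variety $X$, and let $X=\bigcup_{i=1}^n X_i$ be the decomposition of $X$ into irreducible components. Then the action $G\times X\to X$ is observable if and only if each restricted action $G\times X_i\to X_i$ ($i=1,\dots,n$) is observable.
   Context: $\Bbbk$ is algebraically closed; varieties are reduced. Since $G$ is connected, each irreducible component $X_i$ is $G$-stable. An action of $G$ on an affine variety $Y$ is called observable if for every nonzero $G$-stable ideal $I\subset\Bbbk[Y]$ one has $I^G\neq(0)$, where $I^G$ denotes the $G$-invariant elements of $I$ under $(g\cdot f)(y)=f(g^{-1}y)$. *)

theory Defs
  imports "HOL-Algebra.Group" "HOL-Library.FuncSet" "HOL-Computational_Algebra.Polynomial"
begin

text \<open>Concrete affine algebraic geometry over a field k.  Affine n-space is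
  modelled as functions 'v \<Rightarrow> 'k for a finite variable type 'v.\<close>

definition alg_closed :: "'k::field itself \<Rightarrow> bool" where
  "alg_closed _ \<longleftrightarrow> (\<forall>p :: 'k poly. degree p \<noteq> 0 \<longrightarrow> (\<exists>x. poly p x = 0))"

inductive poly_fun :: "(('v \<Rightarrow> 'k::comm_ring_1) \<Rightarrow> 'k) \<Rightarrow> bool" where
  pf_const: "poly_fun (\<lambda>x. c)"
| pf_var: "poly_fun (\<lambda>x. x i)"
| pf_add: "poly_fun p \<Longrightarrow> poly_fun q \<Longrightarrow> poly_fun (\<lambda>x. p x + q x)"
| pf_mult: "poly_fun p \<Longrightarrow> poly_fun q \<Longrightarrow> poly_fun (\<lambda>x. p x * q x)"

text \<open>Zariski closed subsets of k^'v (= affine varieties, reduced).\<close>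
definition zariski_closed :: "('v \<Rightarrow> 'k::comm_ring_1) set \<Rightarrow> bool" where
  "zariski_closed X \<longleftrightarrow> (\<exists>S. (\<forall>p\<in>S. poly_fun p) \<and> X = {x. \<forall>p\<in>S. p x = 0})"

definition zariski_irreducible :: "('v \<Rightarrow> 'k::comm_ring_1) set \<Rightarrow> bool" where
  "zariski_irreducible X \<longleftrightarrow> X \<noteq> {} \<and>
     (\<forall>A B. zariski_closed A \<longrightarrow> zariski_closed B \<longrightarrow> X \<subseteq> A \<union> B \<longrightarrow> X \<subseteq> A \<or> X \<subseteq> B)"

definition zariski_connected :: "('v \<Rightarrow> 'k::comm_ring_1) set \<Rightarrow> bool" where
  "zariski_connected X \<longleftrightarrow>
     \<not> (\<exists>A B. zariski_closed A \<and> zariski_closed B \<and> X \<subseteq> A \<union> B \<and> A \<inter> B \<inter> X = {}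
            \<and> A \<inter> X \<noteq> {} \<and> B \<inter> X \<noteq> {})"

definition irreducible_component ::
  "('v \<Rightarrow> 'k::comm_ring_1) set \<Rightarrow> ('v \<Rightarrow> 'k) set \<Rightarrow> bool" where
  "irreducible_component X C \<longleftrightarrow> C \<subseteq> X \<and> zariski_closed C \<and> zariski_irreducible C \<and>
     (\<forall>D. D \<subseteq> X \<and> zariski_closed D \<and> zariski_irreducible D \<and> C \<subseteq> D \<longrightarrow> D = C)"

definition morphism_on :: "('u \<Rightarrow> 'k::comm_ring_1) set \<Rightarrow> (('u \<Rightarrow> 'k) \<Rightarrow> ('v \<Rightarrow> 'k)) \<Rightarrow> bool" where
  "morphism_on X f \<longleftrightarrow> (\<forall>j. \<exists>p. poly_fun p \<and> (\<forall>x\<in>X. f x j = p x))"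

text \<open>Points of a product k^'u \<times> k^'v are identified with points of k^('u+'v).\<close>
definition pt_pair :: "('u \<Rightarrow> 'k) \<Rightarrow> ('v \<Rightarrow> 'k) \<Rightarrow> ('u + 'v \<Rightarrow> 'k)" where
  "pt_pair g x = case_sum g x"

definition prod_set :: "('u \<Rightarrow> 'k) set \<Rightarrow> ('v \<Rightarrow> 'k) set \<Rightarrow> ('u + 'v \<Rightarrow> 'k) set" where
  "prod_set A B = {pt_pair a b | a b. a \<in> A \<and> b \<in> B}"

definition morphism2_on ::
  "('u \<Rightarrow> 'k::comm_ring_1) set \<Rightarrow> ('v \<Rightarrow> 'k) set \<Rightarrow> (('u \<Rightarrow> 'k) \<Rightarrow> ('v \<Rightarrow> 'k) \<Rightarrow> ('w \<Rightarrow> 'k)) \<Rightarrow> bool" where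
  "morphism2_on A B f \<longleftrightarrow>
     (\<forall>j. \<exists>p. poly_fun p \<and> (\<forall>a\<in>A. \<forall>b\<in>B. f a b j = p (pt_pair a b)))"

definition affine_algebraic_group :: "('u \<Rightarrow> 'k::comm_ring_1) monoid \<Rightarrow> bool" where
  "affine_algebraic_group G \<longleftrightarrow> group G \<and> zariski_closed (carrier G) \<and>
     morphism2_on (carrier G) (carrier G) (\<lambda>g h. g \<otimes>\<^bsub>G\<^esub> h) \<and>
     morphism_on (carrier G) (\<lambda>g. inv\<^bsub>G\<^esub> g)"

definition algebraic_action ::
  "('u \<Rightarrow> 'k::comm_ring_1) monoid \<Rightarrow> ('v \<Rightarrow> 'k) set \<Rightarrow> (('u \<Rightarrow> 'k) \<Rightarrow> ('v \<Rightarrow> 'k) \<Rightarrow> ('v \<Rightarrow> 'k)) \<Rightarrow> bool" where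
  "algebraic_action G X a \<longleftrightarrow>
     (\<forall>g\<in>carrier G. \<forall>x\<in>X. a g x \<in> X) \<and>
     (\<forall>x\<in>X. a \<one>\<^bsub>G\<^esub> x = x) \<and>
     (\<forall>g\<in>carrier G. \<forall>h\<in>carrier G. \<forall>x\<in>X. a (g \<otimes>\<^bsub>G\<^esub> h) x = a g (a h x)) \<and>
     morphism2_on (carrier G) X a"

text \<open>Coordinate ring k[X] of a (reduced) affine variety: restrictions of polynomial
  functions to X.\<close>
definition coord_ring :: "('v \<Rightarrow> 'k::comm_ring_1) set \<Rightarrow> (('v \<Rightarrow> 'k) \<Rightarrow> 'k) set" where
  "coord_ring X = {restrict p X | p. poly_fun p}"

definition coord_zero :: "('v \<Rightarrow> 'k::comm_ring_1) set \<Rightarrow> (('v \<Rightarrow> 'k) \<Rightarrow> 'k)" where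
  "coord_zero X = restrict (\<lambda>x. 0) X"

definition coord_ideal :: "('v \<Rightarrow> 'k::comm_ring_1) set \<Rightarrow> (('v \<Rightarrow> 'k) \<Rightarrow> 'k) set \<Rightarrow> bool" where
  "coord_ideal X I \<longleftrightarrow> I \<subseteq> coord_ring X \<and> coord_zero X \<in> I \<and>
     (\<forall>f\<in>I. \<forall>h\<in>I. restrict (\<lambda>x. f x + h x) X \<in> I) \<and>
     (\<forall>f\<in>I. \<forall>h\<in>coord_ring X. restrict (\<lambda>x. h x * f x) X \<in> I)"

definition translate_fun ::
  "('u \<Rightarrow> 'k) monoid \<Rightarrow> ('v \<Rightarrow> 'k) set \<Rightarrow> (('u \<Rightarrow> 'k) \<Rightarrow> ('v \<Rightarrow> 'k) \<Rightarrow> ('v \<Rightarrow> 'k))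
     \<Rightarrow> ('u \<Rightarrow> 'k) \<Rightarrow> (('v \<Rightarrow> 'k) \<Rightarrow> 'k) \<Rightarrow> (('v \<Rightarrow> 'k) \<Rightarrow> 'k)" where
  "translate_fun G X a g f = restrict (\<lambda>y. f (a (inv\<^bsub>G\<^esub> g) y)) X"

definition G_stable where
  "G_stable G X a I \<longleftrightarrow> (\<forall>g\<in>carrier G. \<forall>f\<in>I. translate_fun G X a g f \<in> I)"

definition invariants where
  "invariants G X a I = {f\<in>I. \<forall>g\<in>carrier G. translate_fun G X a g f = f}"

definition observable ::
  "('u \<Rightarrow> 'k::comm_ring_1) monoid \<Rightarrow> ('v \<Rightarrow> 'k) set \<Rightarrow> (('u \<Rightarrow> 'k) \<Rightarrow> ('v \<Rightarrow> 'k) \<Rightarrow> ('v \<Rightarrow> 'k)) \<Rightarrow> bool" where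
  "observable G X a \<longleftrightarrow>
     (\<forall>I. coord_ideal X I \<and> G_stable G X a I \<and> I \<noteq> {coord_zero X}
          \<longrightarrow> invariants G X a I \<noteq> {coord_zero X})"

end

theory Submission
  imports Defs
begin

(* Hence X = K \<union> D with D (the union of the other components) closed and G-stable, and
       some polynomial t vanishes on D but not on K.
   (4) Coordinate rings: functions on X vanishing on D correspond to functions on K, and this
       correspondence preserves G-invariance and non-vanishing.  Transporting G-stable ideals
       along it in both directions, using irreducibility of K to keep them nonzero, gives the
       two implications of the theorem. *)


text \<open>Polynomial functions in the variables of a set V, i.e. not depending on the other
  coordinates.  Hilbert's basis theorem is proved by induction on V.\<close>

inductive poly_in :: "'v set \<Rightarrow> (('v \<Rightarrow> 'k::comm_ring_1) \<Rightarrow> 'k) \<Rightarrow> bool" for V where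
  poly_in_const: "poly_in V (\<lambda>x. c)"
| poly_in_var: "i \<in> V \<Longrightarrow> poly_in V (\<lambda>x. x i)"
| poly_in_add: "poly_in V p \<Longrightarrow> poly_in V q \<Longrightarrow> poly_in V (\<lambda>x. p x + q x)"
| poly_in_mult: "poly_in V p \<Longrightarrow> poly_in V q \<Longrightarrow> poly_in V (\<lambda>x. p x * q x)"

lemma poly_in_mono: "poly_in V p \<Longrightarrow> V \<subseteq> W \<Longrightarrow> poly_in W p"
  by (induction rule: poly_in.induct) (auto intro: poly_in.intros)

lemma poly_fun_iff_poly_in_UNIV: "poly_fun p \<longleftrightarrow> poly_in UNIV p"
proof
  show "poly_fun p \<Longrightarrow> poly_in UNIV p"
    by (induction rule: poly_fun.induct) (auto intro: poly_in.intros)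
  show "poly_in UNIV p \<Longrightarrow> poly_fun p"
    by (induction rule: poly_in.induct) (auto intro: poly_fun.intros)
qed

lemma poly_in_power: "poly_in V p \<Longrightarrow> poly_in V (\<lambda>x. p x ^ n)"
  by (induction n) (simp_all add: poly_in_mult poly_in_const[of V 1, simplified])

lemma poly_in_empty_const: "poly_in {} p \<Longrightarrow> \<exists>c. p = (\<lambda>x. c)"
  by (induction rule: poly_in.induct) auto

inductive_set ideal_gen :: "'v set \<Rightarrow> (('v \<Rightarrow> 'k::comm_ring_1) \<Rightarrow> 'k) set \<Rightarrow> (('v \<Rightarrow> 'k) \<Rightarrow> 'k) set"
  for V S where
  ideal_gen_zero: "(\<lambda>x. 0) \<in> ideal_gen V S"
| ideal_gen_base: "f \<in> S \<Longrightarrow> f \<in> ideal_gen V S"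
| ideal_gen_add: "f \<in> ideal_gen V S \<Longrightarrow> g \<in> ideal_gen V S \<Longrightarrow> (\<lambda>x. f x + g x) \<in> ideal_gen V S"
| ideal_gen_mult: "poly_in V h \<Longrightarrow> f \<in> ideal_gen V S \<Longrightarrow> (\<lambda>x. h x * f x) \<in> ideal_gen V S"

text \<open>Closure under the ideal operations of the ring of polynomials in V (Q itself may contain
  arbitrary functions).\<close>

definition is_ideal :: "'v set \<Rightarrow> (('v \<Rightarrow> 'k::comm_ring_1) \<Rightarrow> 'k) set \<Rightarrow> bool" where
  "is_ideal V Q \<longleftrightarrow> (\<lambda>x. 0) \<in> Q \<and> (\<forall>f\<in>Q. \<forall>g\<in>Q. (\<lambda>x. f x + g x) \<in> Q) \<and>
     (\<forall>h f. poly_in V h \<longrightarrow> f \<in> Q \<longrightarrow> (\<lambda>x. h x * f x) \<in> Q)"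

lemma is_ideal_add: "is_ideal V Q \<Longrightarrow> f \<in> Q \<Longrightarrow> g \<in> Q \<Longrightarrow> (\<lambda>x. f x + g x) \<in> Q"
  unfolding is_ideal_def by blast

lemma is_ideal_mult: "is_ideal V Q \<Longrightarrow> poly_in V h \<Longrightarrow> f \<in> Q \<Longrightarrow> (\<lambda>x. h x * f x) \<in> Q"
  unfolding is_ideal_def by blast

lemma ideal_gen_least: "is_ideal V Q \<Longrightarrow> S \<subseteq> Q \<Longrightarrow> ideal_gen V S \<subseteq> Q"
proof
  fix f assume Q: "is_ideal V Q" "S \<subseteq> Q" and "f \<in> ideal_gen V S"
  from this(3) show "f \<in> Q" using Q by (induction rule: ideal_gen.induct) (auto simp: is_ideal_def)
qed

lemma is_ideal_ideal_gen: "is_ideal V (ideal_gen V S)"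
  unfolding is_ideal_def by (intro conjI ballI allI impI ideal_gen_zero ideal_gen_add ideal_gen_mult)

lemma ideal_gen_mono: "S \<subseteq> T \<Longrightarrow> ideal_gen V S \<subseteq> ideal_gen V T"
  by (rule ideal_gen_least[OF is_ideal_ideal_gen]) (auto intro: ideal_gen_base)

lemma ideal_gen_trans: "S \<subseteq> ideal_gen V T \<Longrightarrow> ideal_gen V S \<subseteq> ideal_gen V T"
  by (rule ideal_gen_least[OF is_ideal_ideal_gen])

lemma ideal_gen_poly_in: "f \<in> ideal_gen V S \<Longrightarrow> \<forall>s\<in>S. poly_in V s \<Longrightarrow> poly_in V f"
  by (induction rule: ideal_gen.induct) (auto intro: poly_in.intros)

lemma ideal_gen_vanish:
  assumes "f \<in> ideal_gen V F" "\<forall>p\<in>F. \<forall>x\<in>A. p x = 0"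
  shows "\<forall>x\<in>A. f x = 0"
proof -
  have "is_ideal V {f. \<forall>x\<in>A. f x = 0}" unfolding is_ideal_def by auto
  then have "ideal_gen V F \<subseteq> {f. \<forall>x\<in>A. f x = 0}"
    by (rule ideal_gen_least) (use assms(2) in blast)
  then show ?thesis using assms(1) by blast
qed

lemma ideal_gen_finite_support: "f \<in> ideal_gen V S \<Longrightarrow> \<exists>F. finite F \<and> F \<subseteq> S \<and> f \<in> ideal_gen V F"
proof (induction rule: ideal_gen.induct)
  case ideal_gen_zero
  then show ?case by (blast intro: ideal_gen.ideal_gen_zero)
next
  case (ideal_gen_base f)
  then show ?case by (intro exI[of _ "{f}"]) (simp add: ideal_gen.ideal_gen_base)
next
  case (ideal_gen_add f g)
  then obtain F1 F2 where F: "finite F1" "F1 \<subseteq> S" "f \<in> ideal_gen V F1"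
      "finite F2" "F2 \<subseteq> S" "g \<in> ideal_gen V F2"
    by blast
  then have "f \<in> ideal_gen V (F1 \<union> F2)" "g \<in> ideal_gen V (F1 \<union> F2)"
    using ideal_gen_mono[of F1 "F1 \<union> F2" V] ideal_gen_mono[of F2 "F1 \<union> F2" V] by auto
  then show ?case using F by (intro exI[of _ "F1 \<union> F2"]) (simp add: ideal_gen.ideal_gen_add)
next
  case (ideal_gen_mult h f)
  then show ?case by (blast intro: ideal_gen.ideal_gen_mult)
qed

lemma ideal_gen_finite_support_set:
  "finite W \<Longrightarrow> W \<subseteq> ideal_gen V S \<Longrightarrow> \<exists>F. finite F \<and> F \<subseteq> S \<and> W \<subseteq> ideal_gen V F"
proof (induction rule: finite_induct)
  case empty
  then show ?case by auto
next
  case (insert w W)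
  then obtain F1 F2 where "finite F1" "F1 \<subseteq> S" "W \<subseteq> ideal_gen V F1"
      "finite F2" "F2 \<subseteq> S" "w \<in> ideal_gen V F2"
    using ideal_gen_finite_support by (metis insert_subset)
  then show ?case
    using ideal_gen_mono[of F1 "F1 \<union> F2" V] ideal_gen_mono[of F2 "F1 \<union> F2" V]
    by (intro exI[of _ "F1 \<union> F2"]) auto
qed

lemma finite_witnesses:
  assumes "finite F" "\<forall>c\<in>F. \<exists>w\<in>A. P w c"
  shows "\<exists>W. finite W \<and> W \<subseteq> A \<and> (\<forall>c\<in>F. \<exists>w\<in>W. P w c)"
proof -
  obtain h where "\<forall>c\<in>F. h c \<in> A \<and> P (h c) c" using assms(2) by metis
  then show ?thesis using assms(1) by (intro exI[of _ "h ` F"]) auto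
qed

definition top_coeff ::
  "'v set \<Rightarrow> 'v \<Rightarrow> (('v \<Rightarrow> 'k::comm_ring_1) \<Rightarrow> 'k) \<Rightarrow> nat \<Rightarrow> (('v \<Rightarrow> 'k) \<Rightarrow> 'k) \<Rightarrow> bool" where
  "top_coeff V i f d c \<longleftrightarrow> poly_in V c \<and> (\<exists>cs. (\<forall>j. poly_in V (cs j)) \<and>
      f = (\<lambda>x. (\<Sum>j<d. cs j x * x i ^ j) + c x * x i ^ d))"

lemma top_coeffI:
  assumes "poly_in V c" "\<forall>j. poly_in V (cs j)" "f = (\<lambda>x. (\<Sum>j<d. cs j x * x i ^ j) + c x * x i ^ d)"
  shows "top_coeff V i f d c"
  using assms unfolding top_coeff_def by blast

lemma top_coeffE:
  assumes "top_coeff V i f d c"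
  obtains cs where "poly_in V c" "\<forall>j. poly_in V (cs j)"
    "f = (\<lambda>x. (\<Sum>j<d. cs j x * x i ^ j) + c x * x i ^ d)"
  using assms unfolding top_coeff_def by blast

lemma top_coeff_poly_in: "top_coeff V i f d c \<Longrightarrow> poly_in V c"
  by (erule top_coeffE)

lemma top_coeff_zero: "top_coeff V i (\<lambda>x. 0) d (\<lambda>x. 0)"
  by (rule top_coeffI[where cs = "\<lambda>j x. 0"]) (simp_all add: poly_in_const)

lemma top_coeff_one: "top_coeff V i (\<lambda>x. 1) 0 (\<lambda>x. 1)"
  by (rule top_coeffI[where cs = "\<lambda>j x. 0"]) (simp_all add: poly_in_const)

lemma top_coeff_add:
  assumes "top_coeff V i f d c" "top_coeff V i g d c'"
  shows "top_coeff V i (\<lambda>x. f x + g x) d (\<lambda>x. c x + c' x)"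
proof -
  obtain cs where c: "poly_in V c" "\<forall>j. poly_in V (cs j)"
      "f = (\<lambda>x. (\<Sum>j<d. cs j x * x i ^ j) + c x * x i ^ d)"
    using assms(1) by (rule top_coeffE)
  obtain cs' where c': "poly_in V c'" "\<forall>j. poly_in V (cs' j)"
      "g = (\<lambda>x. (\<Sum>j<d. cs' j x * x i ^ j) + c' x * x i ^ d)"
    using assms(2) by (rule top_coeffE)
  show ?thesis
    by (rule top_coeffI[where cs = "\<lambda>j x. cs j x + cs' j x"])
      (use c c' in \<open>auto simp: poly_in_add sum.distrib distrib_right\<close>)
qed

lemma top_coeff_mult:
  assumes "poly_in V h" "top_coeff V i f d c"
  shows "top_coeff V i (\<lambda>x. h x * f x) d (\<lambda>x. h x * c x)"
proof -
  obtain cs where c: "poly_in V c" "\<forall>j. poly_in V (cs j)"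
      "f = (\<lambda>x. (\<Sum>j<d. cs j x * x i ^ j) + c x * x i ^ d)"
    using assms(2) by (rule top_coeffE)
  show ?thesis
    by (rule top_coeffI[where cs = "\<lambda>j x. h x * cs j x"])
      (use assms(1) c in \<open>auto simp: poly_in_mult sum_distrib_left distrib_left mult.assoc\<close>)
qed

lemma top_coeff_shift1:
  assumes "top_coeff V i f d c"
  shows "top_coeff V i (\<lambda>x. x i * f x) (Suc d) c"
proof -
  obtain cs where c: "poly_in V c" "\<forall>j. poly_in V (cs j)"
      "f = (\<lambda>x. (\<Sum>j<d. cs j x * x i ^ j) + c x * x i ^ d)"
    using assms by (rule top_coeffE)
  define cs' where "cs' = case_nat (\<lambda>x. 0) cs"
  have sum_shift: "(\<Sum>j<Suc d. cs' j x * x i ^ j) = x i * (\<Sum>j<d. cs j x * x i ^ j)" for x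
    unfolding cs'_def by (simp only: sum.lessThan_Suc_shift) (simp add: sum_distrib_left mult_ac)
  show ?thesis
  proof (rule top_coeffI[where cs = cs'])
    show "\<forall>j. poly_in V (cs' j)"
      unfolding cs'_def using c(2) by (simp add: poly_in_const split: nat.split)
    show "(\<lambda>x. x i * f x) = (\<lambda>x. (\<Sum>j<Suc d. cs' j x * x i ^ j) + c x * x i ^ Suc d)"
      unfolding c(3) sum_shift by (rule ext) (simp add: distrib_left mult_ac)
  qed (rule c(1))
qed

lemma top_coeff_shift: "top_coeff V i f d c \<Longrightarrow> top_coeff V i (\<lambda>x. x i ^ k * f x) (d + k) c"
proof (induction k)
  case (Suc k)
  from top_coeff_shift1[OF Suc.IH[OF Suc.prems]] show ?case by (simp add: mult.assoc)
qed simp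

lemma top_coeff_pad1:
  assumes "top_coeff V i f d c"
  shows "top_coeff V i f (Suc d) (\<lambda>x. 0)"
proof -
  obtain cs where c: "poly_in V c" "\<forall>j. poly_in V (cs j)"
      "f = (\<lambda>x. (\<Sum>j<d. cs j x * x i ^ j) + c x * x i ^ d)"
    using assms by (rule top_coeffE)
  have "(\<Sum>j<d. (cs(d := c)) j x * x i ^ j) = (\<Sum>j<d. cs j x * x i ^ j)" for x
    by (rule sum.cong) auto
  then show ?thesis
    by (intro top_coeffI[where cs = "cs(d := c)"]) (use c in \<open>auto simp: poly_in_const\<close>)
qed

lemma top_coeff_pad: "top_coeff V i f d c \<Longrightarrow> d \<le> e \<Longrightarrow> \<exists>c'. top_coeff V i f e c'"
proof (induction e)
  case (Suc e)
  then show ?case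
    by (cases "d = Suc e") (auto dest: top_coeff_pad1 simp: le_Suc_eq)
qed auto

lemma top_coeff_lower:
  assumes "top_coeff V i f (Suc d) (\<lambda>x. 0)"
  shows "\<exists>c. top_coeff V i f d c"
proof -
  obtain cs where c: "\<forall>j. poly_in V (cs j)" "f = (\<lambda>x. (\<Sum>j<Suc d. cs j x * x i ^ j) + 0 * x i ^ Suc d)"
    using assms by (rule top_coeffE)
  then have "top_coeff V i f d (cs d)" by (intro top_coeffI[where cs = cs]) auto
  then show ?thesis by blast
qed

lemma top_coeff_degree0: "top_coeff V i f 0 (\<lambda>x. 0) \<Longrightarrow> f = (\<lambda>x. 0)"
  by (erule top_coeffE) simp

lemma top_coeff_add_exists:
  assumes "top_coeff V i f d1 c1" "top_coeff V i g d2 c2"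
  shows "\<exists>d c. top_coeff V i (\<lambda>x. f x + g x) d c"
proof -
  obtain c1' c2' where "top_coeff V i f (max d1 d2) c1'" "top_coeff V i g (max d1 d2) c2'"
    using top_coeff_pad[OF assms(1), of "max d1 d2"] top_coeff_pad[OF assms(2), of "max d1 d2"] by auto
  from top_coeff_add[OF this] show ?thesis by blast
qed

lemma top_coeff_times_poly:
  assumes "poly_in (insert i V) q"
  shows "top_coeff V i f d c \<Longrightarrow> \<exists>d' c'. top_coeff V i (\<lambda>x. f x * q x) d' c'"
  using assms
proof (induction arbitrary: f d c rule: poly_in.induct)
  case (poly_in_const b)
  from top_coeff_mult[OF poly_in.poly_in_const this] show ?case by (auto simp: mult.commute)
next
  case (poly_in_var j)
  show ?case
  proof (cases "j = i")
    case True
    from top_coeff_shift1[OF poly_in_var.prems(1)] show ?thesis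
      unfolding True by (auto simp: mult.commute)
  next
    case False
    then have "poly_in V (\<lambda>x. x j)" using poly_in_var.hyps by (simp add: poly_in.poly_in_var)
    from top_coeff_mult[OF this poly_in_var.prems(1)] show ?thesis by (auto simp: mult.commute)
  qed
next
  case (poly_in_add p q)
  obtain d1 c1 d2 c2 where "top_coeff V i (\<lambda>x. f x * p x) d1 c1" "top_coeff V i (\<lambda>x. f x * q x) d2 c2"
    using poly_in_add.IH poly_in_add.prems by blast
  from top_coeff_add_exists[OF this] show ?case by (simp add: distrib_left)
next
  case (poly_in_mult p q)
  obtain d1 c1 where "top_coeff V i (\<lambda>x. f x * p x) d1 c1"
    using poly_in_mult.IH(1) poly_in_mult.prems by blast
  from poly_in_mult.IH(2)[OF this] show ?case by (simp add: mult.assoc)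
qed

lemma top_coeff_exists:
  assumes "poly_in (insert i V) g"
  shows "\<exists>d c. top_coeff V i g d c"
  using top_coeff_times_poly[OF assms top_coeff_one] by simp

definition top_coeffs ::
  "'v set \<Rightarrow> 'v \<Rightarrow> (('v \<Rightarrow> 'k::comm_ring_1) \<Rightarrow> 'k) set \<Rightarrow> nat \<Rightarrow> (('v \<Rightarrow> 'k) \<Rightarrow> 'k) set" where
  "top_coeffs V i A d = {c. \<exists>f\<in>A. top_coeff V i f d c}"

lemma top_coeffs_mono: "A \<subseteq> B \<Longrightarrow> top_coeffs V i A d \<subseteq> top_coeffs V i B d"
  unfolding top_coeffs_def by blast

lemma is_ideal_top_coeffs:
  fixes A :: "(('v \<Rightarrow> 'k::comm_ring_1) \<Rightarrow> 'k) set"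
  assumes A: "is_ideal (insert i V) A"
  shows "is_ideal V (top_coeffs V i A d)"
  unfolding is_ideal_def
proof (intro conjI ballI allI impI)
  have "(\<lambda>x. 0) \<in> A" using A unfolding is_ideal_def by blast
  with top_coeff_zero[of V i d] show "(\<lambda>x. 0) \<in> top_coeffs V i A d"
    unfolding top_coeffs_def by blast
next
  fix c c' assume "c \<in> top_coeffs V i A d" "c' \<in> top_coeffs V i A d"
  then obtain f f' where "f \<in> A" "top_coeff V i f d c" "f' \<in> A" "top_coeff V i f' d c'"
    unfolding top_coeffs_def by blast
  from is_ideal_add[OF A \<open>f \<in> A\<close> \<open>f' \<in> A\<close>] top_coeff_add[OF this(2,4)]
  show "(\<lambda>x. c x + c' x) \<in> top_coeffs V i A d" unfolding top_coeffs_def by blast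
next
  fix h :: "('v \<Rightarrow> 'k) \<Rightarrow> 'k" and c
  assume h: "poly_in V h" and "c \<in> top_coeffs V i A d"
  then obtain f where "f \<in> A" "top_coeff V i f d c" unfolding top_coeffs_def by blast
  have "poly_in (insert i V) h" using poly_in_mono[OF h] by blast
  from is_ideal_mult[OF A this \<open>f \<in> A\<close>] top_coeff_mult[OF h \<open>top_coeff V i f d c\<close>]
  show "(\<lambda>x. h x * c x) \<in> top_coeffs V i A d" unfolding top_coeffs_def by blast
qed

text \<open>In an ideal, top coefficients of degree d are also top coefficients of every higher degree
  (multiply by a power of the variable i).\<close>

lemma top_coeffs_degree_mono:
  assumes "is_ideal (insert i V) A" "d \<le> e"
  shows "top_coeffs V i A d \<subseteq> top_coeffs V i A e"
proof
  fix c assume "c \<in> top_coeffs V i A d"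
  then obtain f where f: "f \<in> A" "top_coeff V i f d c" unfolding top_coeffs_def by blast
  have "poly_in (insert i V) (\<lambda>x. x i ^ (e - d))" by (intro poly_in_power poly_in_var) simp
  from is_ideal_mult[OF assms(1) this f(1)] have "(\<lambda>x. x i ^ (e - d) * f x) \<in> A" .
  moreover have "top_coeff V i (\<lambda>x. x i ^ (e - d) * f x) e c"
    using top_coeff_shift[OF f(2), of "e - d"] assms(2) by simp
  ultimately show "c \<in> top_coeffs V i A e" unfolding top_coeffs_def by blast
qed

lemma ideal_gen_by_top_coeffs:
  assumes I: "is_ideal (insert i V) I" "\<forall>f\<in>I. poly_in (insert i V) f"
    and W: "W \<subseteq> I"
    and match: "\<forall>d. top_coeffs V i I d \<subseteq> top_coeffs V i (ideal_gen (insert i V) W) d"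
  shows "I \<subseteq> ideal_gen (insert i V) W"
proof -
  have gen_sub: "ideal_gen (insert i V) W \<subseteq> I" by (rule ideal_gen_least[OF I(1) W])
  text \<open>Subtracting a matching element of the generated ideal lowers the degree.\<close>
  have cancel: "\<exists>g\<in>ideal_gen (insert i V) W. (\<lambda>x. f x + (-1) * g x) \<in> I \<and>
      top_coeff V i (\<lambda>x. f x + (-1) * g x) d (\<lambda>x. 0)"
    if f: "f \<in> I" "top_coeff V i f d c" for f d c
  proof -
    obtain g where g: "g \<in> ideal_gen (insert i V) W" "top_coeff V i g d c"
      using match f unfolding top_coeffs_def by blast
    have "(\<lambda>x. (\<lambda>x. -1) x * g x) \<in> I"
      using is_ideal_mult[OF I(1) poly_in_const] g(1) gen_sub by blast
    from is_ideal_add[OF I(1) f(1) this] have diff_in_I: "(\<lambda>x. f x + (-1) * g x) \<in> I" .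
    have "top_coeff V i (\<lambda>x. f x + (-1) * g x) d (\<lambda>x. c x + (-1) * c x)"
      by (rule top_coeff_add[OF f(2) top_coeff_mult[OF poly_in_const g(2)]])
    then show ?thesis using g(1) diff_in_I by auto
  qed
  have reduce: "f \<in> ideal_gen (insert i V) W" if "f \<in> I" "top_coeff V i f d c" for f d c
    using that
  proof (induction d arbitrary: f c)
    case (0 f c)
    then obtain g where g: "g \<in> ideal_gen (insert i V) W"
        "top_coeff V i (\<lambda>x. f x + (-1) * g x) 0 (\<lambda>x. 0)"
      using cancel by blast
    have "f x + (-1) * g x = 0" for x using fun_cong[OF top_coeff_degree0[OF g(2)]] by simp
    then have "f = g" by (intro ext) (simp add: add_eq_0_iff2)
    then show ?case using g(1) by simp
  next
    case (Suc d f c)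
    then obtain g where g: "g \<in> ideal_gen (insert i V) W" "(\<lambda>x. f x + (-1) * g x) \<in> I"
        "top_coeff V i (\<lambda>x. f x + (-1) * g x) (Suc d) (\<lambda>x. 0)"
      using cancel by blast
    then obtain c' where "top_coeff V i (\<lambda>x. f x + (-1) * g x) d c'"
      using top_coeff_lower[OF g(3)] by blast
    from ideal_gen_add[OF Suc.IH[OF g(2) this] g(1)] show ?case by simp
  qed
  show ?thesis
  proof
    fix f assume "f \<in> I"
    then have "poly_in (insert i V) f" using I(2) by blast
    from top_coeff_exists[OF this] obtain d c where "top_coeff V i f d c" by blast
    with \<open>f \<in> I\<close> show "f \<in> ideal_gen (insert i V) W" by (rule reduce)
  qed
qed

text \<open>The two finiteness statements below use Hilbert's theorem for the variables V, in the form
  of the hypothesis \<open>hilbV\<close>.\<close>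

lemma top_coeffs_match_degree:
  fixes A :: "(('v \<Rightarrow> 'k::comm_ring_1) \<Rightarrow> 'k) set"
  assumes hilbV: "\<And>S :: (('v \<Rightarrow> 'k) \<Rightarrow> 'k) set. \<forall>s\<in>S. poly_in V s \<Longrightarrow> \<exists>F. finite F \<and> F \<subseteq> S \<and> S \<subseteq> ideal_gen V F"
  shows "\<exists>W. finite W \<and> W \<subseteq> A \<and>
    top_coeffs V i A d \<subseteq> top_coeffs V i (ideal_gen (insert i V) W) d"
proof -
  have "\<forall>s\<in>top_coeffs V i A d. poly_in V s"
    unfolding top_coeffs_def by (auto dest: top_coeff_poly_in)
  from hilbV[OF this] obtain F where F: "finite F" "F \<subseteq> top_coeffs V i A d"
      "top_coeffs V i A d \<subseteq> ideal_gen V F"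
    by blast
  have "\<forall>c\<in>F. \<exists>f\<in>A. top_coeff V i f d c" using F(2) unfolding top_coeffs_def by blast
  from finite_witnesses[OF F(1) this]
  obtain W where W: "finite W" "W \<subseteq> A" "\<forall>c\<in>F. \<exists>f\<in>W. top_coeff V i f d c"
    by blast
  have "W \<subseteq> ideal_gen (insert i V) W" by (blast intro: ideal_gen_base)
  then have "F \<subseteq> top_coeffs V i (ideal_gen (insert i V) W) d"
    using W(3) unfolding top_coeffs_def by blast
  then have "ideal_gen V F \<subseteq> top_coeffs V i (ideal_gen (insert i V) W) d"
    by (rule ideal_gen_least[OF is_ideal_top_coeffs[OF is_ideal_ideal_gen]])
  then show ?thesis using W F(3) by blast
qed

lemma top_coeffs_match_all_degrees:
  fixes A :: "(('v \<Rightarrow> 'k::comm_ring_1) \<Rightarrow> 'k) set"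
  assumes hilbV: "\<And>S :: (('v \<Rightarrow> 'k) \<Rightarrow> 'k) set. \<forall>s\<in>S. poly_in V s \<Longrightarrow> \<exists>F. finite F \<and> F \<subseteq> S \<and> S \<subseteq> ideal_gen V F"
  shows "\<exists>W D. finite W \<and> W \<subseteq> A \<and>
    (\<forall>e. top_coeffs V i A e \<subseteq> top_coeffs V i (ideal_gen (insert i V) W) D)"
proof -
  define L where "L = (\<Union>e. top_coeffs V i A e)"
  have "\<forall>s\<in>L. poly_in V s" unfolding L_def top_coeffs_def by (auto dest: top_coeff_poly_in)
  from hilbV[OF this] obtain F where F: "finite F" "F \<subseteq> L" "L \<subseteq> ideal_gen V F" by blast
  have "\<forall>c\<in>F. \<exists>w\<in>A \<times> UNIV. top_coeff V i (fst w) (snd w) c"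
  proof
    fix c assume "c \<in> F"
    then obtain f e where "f \<in> A" "top_coeff V i f e c"
      using F(2) unfolding L_def top_coeffs_def by blast
    then show "\<exists>w\<in>A \<times> UNIV. top_coeff V i (fst w) (snd w) c" by (intro bexI[of _ "(f, e)"]) auto
  qed
  from finite_witnesses[OF F(1) this] obtain W' where W': "finite W'" "W' \<subseteq> A \<times> UNIV"
      "\<forall>c\<in>F. \<exists>w\<in>W'. top_coeff V i (fst w) (snd w) c"
    by blast
  define W where "W = fst ` W'"
  define D where "D = Max (insert 0 (snd ` W'))"
  let ?J = "ideal_gen (insert i V) W"
  have "F \<subseteq> top_coeffs V i ?J D"
  proof
    fix c assume "c \<in> F"
    then obtain w where w: "w \<in> W'" "top_coeff V i (fst w) (snd w) c" using W'(3) by blast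
    have "fst w \<in> ?J" unfolding W_def using w(1) by (blast intro: ideal_gen_base)
    then have c: "c \<in> top_coeffs V i ?J (snd w)" using w(2) unfolding top_coeffs_def by blast
    have "snd w \<le> D"
      unfolding D_def using Max_ge[of "insert 0 (snd ` W')" "snd w"] W'(1) w(1) by simp
    from top_coeffs_degree_mono[OF is_ideal_ideal_gen this] c
    show "c \<in> top_coeffs V i ?J D" by (rule subsetD)
  qed
  then have "ideal_gen V F \<subseteq> top_coeffs V i ?J D"
    by (rule ideal_gen_least[OF is_ideal_top_coeffs[OF is_ideal_ideal_gen]])
  then have "\<forall>e. top_coeffs V i A e \<subseteq> top_coeffs V i ?J D" using F(3) unfolding L_def by blast
  moreover have "finite W" "W \<subseteq> A" unfolding W_def using W'(1,2) by auto
  ultimately show ?thesis by blast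
qed

text \<open>Combining both: a finite subset of A matches all top coefficients of A degree by degree
  (degrees below D by the first lemma, degrees from D on by the second one).\<close>

lemma top_coeffs_match:
  fixes A :: "(('v \<Rightarrow> 'k::comm_ring_1) \<Rightarrow> 'k) set"
  assumes hilbV: "\<And>S :: (('v \<Rightarrow> 'k) \<Rightarrow> 'k) set. \<forall>s\<in>S. poly_in V s \<Longrightarrow> \<exists>F. finite F \<and> F \<subseteq> S \<and> S \<subseteq> ideal_gen V F"
  shows "\<exists>W. finite W \<and> W \<subseteq> A \<and>
    (\<forall>d. top_coeffs V i A d \<subseteq> top_coeffs V i (ideal_gen (insert i V) W) d)"
proof -
  have "\<exists>W D. finite W \<and> W \<subseteq> A \<and>
      (\<forall>e. top_coeffs V i A e \<subseteq> top_coeffs V i (ideal_gen (insert i V) W) D)"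
    by (rule top_coeffs_match_all_degrees[OF hilbV])
  then obtain W0 D where W0: "finite W0" "W0 \<subseteq> A"
      "\<And>e. top_coeffs V i A e \<subseteq> top_coeffs V i (ideal_gen (insert i V) W0) D"
    by blast
  have "\<forall>e. \<exists>We. finite We \<and> We \<subseteq> A \<and>
      top_coeffs V i A e \<subseteq> top_coeffs V i (ideal_gen (insert i V) We) e"
    by (intro allI top_coeffs_match_degree[OF hilbV])
  from choice[OF this] obtain We where "\<forall>e. finite (We e) \<and> We e \<subseteq> A \<and>
      top_coeffs V i A e \<subseteq> top_coeffs V i (ideal_gen (insert i V) (We e)) e"
    by blast
  then have We: "\<And>e. finite (We e)" "\<And>e. We e \<subseteq> A"
      "\<And>e. top_coeffs V i A e \<subseteq> top_coeffs V i (ideal_gen (insert i V) (We e)) e"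
    by simp_all
  define W where "W = W0 \<union> (\<Union>e<D. We e)"
  have enlarge: "top_coeffs V i (ideal_gen (insert i V) W') e \<subseteq> top_coeffs V i (ideal_gen (insert i V) W) e"
    if "W' \<subseteq> W" for W' e
    by (rule top_coeffs_mono[OF ideal_gen_mono[OF that]])
  have "top_coeffs V i A d \<subseteq> top_coeffs V i (ideal_gen (insert i V) W) d" for d
  proof (cases "D \<le> d")
    case True
    have "top_coeffs V i A d \<subseteq> top_coeffs V i (ideal_gen (insert i V) W0) D" by (rule W0(3))
    also have "\<dots> \<subseteq> top_coeffs V i (ideal_gen (insert i V) W0) d"
      by (rule top_coeffs_degree_mono[OF is_ideal_ideal_gen True])
    also have "\<dots> \<subseteq> top_coeffs V i (ideal_gen (insert i V) W) d"
      by (rule enlarge) (simp add: W_def)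
    finally show ?thesis .
  next
    case False
    have "top_coeffs V i A d \<subseteq> top_coeffs V i (ideal_gen (insert i V) (We d)) d" by (rule We(3))
    also have "\<dots> \<subseteq> top_coeffs V i (ideal_gen (insert i V) W) d"
      by (rule enlarge) (use False in \<open>auto simp: W_def\<close>)
    finally show ?thesis .
  qed
  moreover have "finite W" "W \<subseteq> A" unfolding W_def using W0(1,2) We(1,2) by auto
  ultimately show ?thesis by blast
qed

text \<open>Without variables every polynomial is constant, so over a field any nonzero generator
  generates everything.\<close>

lemma hilbert_basis_no_vars:
  fixes S :: "(('v \<Rightarrow> 'k::field) \<Rightarrow> 'k) set"
  assumes S: "\<forall>s\<in>S. poly_in {} s"
  shows "\<exists>F. finite F \<and> F \<subseteq> S \<and> S \<subseteq> ideal_gen {} F"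
proof (cases "S \<subseteq> {\<lambda>x. 0}")
  case True
  then show ?thesis by (intro exI[of _ "{}"]) (auto intro: ideal_gen_zero)
next
  case False
  then obtain s where s: "s \<in> S" "s \<noteq> (\<lambda>x. 0)" by auto
  obtain c where c: "s = (\<lambda>x. c)" using poly_in_empty_const[OF bspec[OF S s(1)]] by blast
  have "c \<noteq> 0" using s(2) unfolding c by auto
  have "t \<in> ideal_gen {} {s}" if t: "t \<in> S" for t
  proof -
    obtain e where e: "t = (\<lambda>x. e)" using poly_in_empty_const[OF bspec[OF S t]] by blast
    have "(\<lambda>x. (\<lambda>x. e / c) x * s x) \<in> ideal_gen {} {s}"
      by (rule ideal_gen_mult[OF poly_in_const ideal_gen_base]) simp
    then show ?thesis using \<open>c \<noteq> 0\<close> unfolding e c by simp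
  qed
  then show ?thesis using s by (intro exI[of _ "{s}"]) auto
qed

theorem hilbert_basis:
  fixes S :: "(('v \<Rightarrow> 'k::field) \<Rightarrow> 'k) set"
  assumes "finite V" "\<forall>s\<in>S. poly_in V s"
  shows "\<exists>F. finite F \<and> F \<subseteq> S \<and> S \<subseteq> ideal_gen V F"
  using assms
proof (induction V arbitrary: S rule: finite_induct)
  case empty
  then show ?case by (rule hilbert_basis_no_vars)
next
  case (insert i V)
  define I where "I = ideal_gen (insert i V) S"
  have "\<exists>W. finite W \<and> W \<subseteq> I \<and>
      (\<forall>d. top_coeffs V i I d \<subseteq> top_coeffs V i (ideal_gen (insert i V) W) d)"
    by (rule top_coeffs_match[OF insert.IH])
  then obtain W where W: "finite W" "W \<subseteq> I"
      "\<forall>d. top_coeffs V i I d \<subseteq> top_coeffs V i (ideal_gen (insert i V) W) d"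
    by blast
  have "is_ideal (insert i V) I" unfolding I_def by (rule is_ideal_ideal_gen)
  moreover have "\<forall>f\<in>I. poly_in (insert i V) f"
    unfolding I_def using insert.prems by (blast intro: ideal_gen_poly_in)
  ultimately have "I \<subseteq> ideal_gen (insert i V) W"
    by (rule ideal_gen_by_top_coeffs[OF _ _ W(2,3)])
  moreover have "\<exists>F. finite F \<and> F \<subseteq> S \<and> W \<subseteq> ideal_gen (insert i V) F"
    by (rule ideal_gen_finite_support_set[OF W(1) W(2)[unfolded I_def]])
  then obtain F where F: "finite F" "F \<subseteq> S" "W \<subseteq> ideal_gen (insert i V) F" by blast
  moreover have "S \<subseteq> I" unfolding I_def by (auto intro: ideal_gen_base)
  ultimately have "S \<subseteq> ideal_gen (insert i V) F"
    using ideal_gen_trans[OF F(3)] by (meson subset_trans)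
  then show ?case using F(1,2) by blast
qed

corollary hilbert_basis_poly_fun:
  fixes S :: "(('v::finite \<Rightarrow> 'k::field) \<Rightarrow> 'k) set"
  assumes "\<forall>s\<in>S. poly_fun s"
  shows "\<exists>F. finite F \<and> F \<subseteq> S \<and> S \<subseteq> ideal_gen UNIV F"
proof -
  have "\<forall>s\<in>S. poly_in UNIV s" using assms by (simp add: poly_fun_iff_poly_in_UNIV)
  then show ?thesis by (rule hilbert_basis[OF finite_UNIV])
qed


abbreviation zero_set :: "(('v \<Rightarrow> 'k::comm_ring_1) \<Rightarrow> 'k) set \<Rightarrow> ('v \<Rightarrow> 'k) set" where
  "zero_set S \<equiv> {x. \<forall>p\<in>S. p x = 0}"

lemma zariski_closedI: "\<forall>p\<in>S. poly_fun p \<Longrightarrow> zariski_closed (zero_set S)"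
  unfolding zariski_closed_def by blast

lemma zariski_closedE:
  assumes "zariski_closed X"
  obtains S where "\<forall>p\<in>S. poly_fun p" "X = zero_set S"
  using assms unfolding zariski_closed_def by blast

lemma closed_empty: "zariski_closed ({} :: ('v \<Rightarrow> 'k::comm_ring_1) set)"
proof -
  have "({} :: ('v \<Rightarrow> 'k) set) = zero_set {\<lambda>x. 1}" by simp
  then show ?thesis using zariski_closedI[of "{\<lambda>x. 1}"] by (simp add: poly_fun.pf_const)
qed

text \<open>Arbitrary intersections of closed sets are closed: take the union of the equations.\<close>

lemma closed_Inter:
  fixes \<A> :: "('v \<Rightarrow> 'k::comm_ring_1) set set"
  assumes "\<forall>A\<in>\<A>. zariski_closed A"
  shows "zariski_closed (\<Inter>\<A>)"
proof -
  have "\<forall>A\<in>\<A>. \<exists>S. (\<forall>p\<in>S. poly_fun p) \<and> A = zero_set S"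
    using assms unfolding zariski_closed_def by blast
  from bchoice[OF this]
  obtain eqs where eqs: "\<forall>A\<in>\<A>. (\<forall>p\<in>eqs A. poly_fun p) \<and> A = zero_set (eqs A)"
    by blast
  have "x \<in> A \<longleftrightarrow> (\<forall>p\<in>eqs A. p x = 0)" if "A \<in> \<A>" for A x
  proof -
    have "A = zero_set (eqs A)" using eqs that by blast
    then have "x \<in> A \<longleftrightarrow> x \<in> zero_set (eqs A)" by (rule arg_cong[where f = "\<lambda>S. x \<in> S"])
    then show ?thesis by simp
  qed
  then have "\<Inter>\<A> = zero_set (\<Union>A\<in>\<A>. eqs A)" by blast
  moreover have "\<forall>p\<in>(\<Union>A\<in>\<A>. eqs A). poly_fun p" using eqs by blast
  ultimately show ?thesis using zariski_closedI[of "\<Union>A\<in>\<A>. eqs A"] by simp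
qed

lemma closed_Int: "zariski_closed A \<Longrightarrow> zariski_closed B \<Longrightarrow> zariski_closed (A \<inter> B)"
  using closed_Inter[of "{A, B}"] by simp

text \<open>Over a field, a union of two closed sets is the zero set of the pairwise products of
  their equations.\<close>

lemma closed_Un:
  fixes A B :: "('v \<Rightarrow> 'k::field) set"
  assumes "zariski_closed A" "zariski_closed B"
  shows "zariski_closed (A \<union> B)"
proof -
  obtain S where S: "\<forall>p\<in>S. poly_fun p" "A = zero_set S" using assms(1) by (rule zariski_closedE)
  obtain T where T: "\<forall>p\<in>T. poly_fun p" "B = zero_set T" using assms(2) by (rule zariski_closedE)
  define U where "U = {(\<lambda>x. s x * t x) | s t. s \<in> S \<and> t \<in> T}"
  have "A \<union> B = zero_set U"
  proof
    show "A \<union> B \<subseteq> zero_set U" unfolding U_def S(2) T(2) by auto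
    show "zero_set U \<subseteq> A \<union> B"
    proof
      fix x assume x: "x \<in> zero_set U"
      show "x \<in> A \<union> B"
      proof (rule ccontr)
        assume "x \<notin> A \<union> B"
        then obtain s t where "s \<in> S" "s x \<noteq> 0" "t \<in> T" "t x \<noteq> 0" unfolding S(2) T(2) by auto
        moreover have "(\<lambda>x. s x * t x) \<in> U" unfolding U_def using calculation by blast
        ultimately show False using x by auto
      qed
    qed
  qed
  moreover have "\<forall>p\<in>U. poly_fun p" unfolding U_def using S(1) T(1) by (auto intro!: poly_fun.pf_mult)
  ultimately show ?thesis using zariski_closedI[of U] by simp
qed

lemma closed_Union:
  fixes \<C> :: "('v \<Rightarrow> 'k::field) set set"
  shows "finite \<C> \<Longrightarrow> \<forall>A\<in>\<C>. zariski_closed A \<Longrightarrow> zariski_closed (\<Union>\<C>)"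
proof (induction rule: finite_induct)
  case (insert A \<C>)
  then show ?case using closed_Un[of A "\<Union>\<C>"] by simp
qed (simp add: closed_empty)

lemma poly_fun_subst:
  "poly_fun q \<Longrightarrow> \<forall>j. poly_fun (P j) \<Longrightarrow> poly_fun (\<lambda>x. q (\<lambda>j. P j x))"
proof (induction rule: poly_fun.induct)
  case (pf_const c)
  show ?case by (rule poly_fun.pf_const)
next
  case (pf_var i)
  then show ?case by simp
next
  case (pf_add p q)
  then show ?case using poly_fun.pf_add by blast
next
  case (pf_mult p q)
  then show ?case using poly_fun.pf_mult by blast
qed

lemma closed_poly_preimage:
  fixes C :: "('w \<Rightarrow> 'k::comm_ring_1) set"
  assumes "zariski_closed C" "\<forall>j. poly_fun (P j)"
  shows "zariski_closed {x. (\<lambda>j. P j x) \<in> C}"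
proof -
  obtain T where T: "\<forall>p\<in>T. poly_fun p" "C = zero_set T" using assms(1) by (rule zariski_closedE)
  have "{x. (\<lambda>j. P j x) \<in> C} = zero_set ((\<lambda>t x. t (\<lambda>j. P j x)) ` T)" using T(2) by auto
  moreover have "\<forall>p\<in>(\<lambda>t x. t (\<lambda>j. P j x)) ` T. poly_fun p"
    using T(1) poly_fun_subst[OF _ assms(2)] by blast
  ultimately show ?thesis using zariski_closedI[of "(\<lambda>t x. t (\<lambda>j. P j x)) ` T"] by simp
qed

text \<open>Fixing one factor of a point of a product is a polynomial substitution.\<close>

lemma poly_fun_pair_left: "poly_fun p \<Longrightarrow> poly_fun (\<lambda>x. p (pt_pair g x))"
proof -
  assume p: "poly_fun p"
  have "\<forall>j. poly_fun (\<lambda>x. case_sum g x j)"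
    by (intro allI, case_tac j) (simp_all add: poly_fun.pf_const poly_fun.pf_var)
  from poly_fun_subst[OF p this] show ?thesis unfolding pt_pair_def by simp
qed

lemma poly_fun_pair_right: "poly_fun p \<Longrightarrow> poly_fun (\<lambda>g. p (pt_pair g x))"
proof -
  assume p: "poly_fun p"
  have "\<forall>j. poly_fun (\<lambda>g. case_sum g x j)"
    by (intro allI, case_tac j) (simp_all add: poly_fun.pf_const poly_fun.pf_var)
  from poly_fun_subst[OF p this] show ?thesis unfolding pt_pair_def by simp
qed

text \<open>Descending chain condition: by Hilbert's basis theorem the strict inclusion of closed
  subsets of affine space is well-founded.\<close>

definition closed_strict_subset :: "(('v \<Rightarrow> 'k::comm_ring_1) set \<times> ('v \<Rightarrow> 'k) set) set" where
  "closed_strict_subset = {(A, B). zariski_closed A \<and> zariski_closed B \<and> A \<subset> B}"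

lemma wf_closed_strict_subset:
  "wf (closed_strict_subset :: (('v::finite \<Rightarrow> 'k::field) set \<times> _) set)"
  unfolding wf_iff_no_infinite_down_chain
proof
  assume "\<exists>X. \<forall>n. (X (Suc n), X n) \<in> (closed_strict_subset :: (('v \<Rightarrow> 'k) set \<times> _) set)"
  then obtain X :: "nat \<Rightarrow> ('v \<Rightarrow> 'k) set" where X: "\<And>n. (X (Suc n), X n) \<in> closed_strict_subset"
    by blast
  have closed: "zariski_closed (X n)" for n using X[of n] unfolding closed_strict_subset_def by auto
  have strict: "X (Suc n) \<subset> X n" for n using X[of n] unfolding closed_strict_subset_def by auto
  have anti: "m \<le> n \<Longrightarrow> X n \<subseteq> X m" for m n
    using lift_Suc_antimono_le[of X m n] strict by auto
  text \<open>The equations vanishing on some member of the chain are generated by finitely many,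
    which all vanish on one member \<open>X N\<close>; then \<open>X N \<subseteq> X (Suc N)\<close>.\<close>
  define S where "S = {p. poly_fun p \<and> (\<exists>n. \<forall>x\<in>X n. p x = 0)}"
  obtain F where F: "finite F" "F \<subseteq> S" "S \<subseteq> ideal_gen UNIV F"
    using hilbert_basis_poly_fun[of S] unfolding S_def by blast
  have "\<forall>p\<in>F. \<exists>n. \<forall>x\<in>X n. p x = 0" using F(2) unfolding S_def by blast
  then obtain np where np: "\<forall>p\<in>F. \<forall>x\<in>X (np p). p x = 0" by metis
  define N where "N = Max (insert 0 (np ` F))"
  have "np p \<le> N" if "p \<in> F" for p unfolding N_def using F(1) that by (intro Max_ge) auto
  then have FN: "\<forall>p\<in>F. \<forall>x\<in>X N. p x = 0" using np anti by blast
  have SN: "\<forall>s\<in>S. \<forall>x\<in>X N. s x = 0" using F(3) ideal_gen_vanish[OF _ FN] by blast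
  obtain T where T: "\<forall>p\<in>T. poly_fun p" "X (Suc N) = zero_set T"
    using closed[of "Suc N"] by (rule zariski_closedE)
  have "T \<subseteq> S" unfolding S_def using T by auto
  then have "X N \<subseteq> X (Suc N)" using SN T(2) by auto
  then show False using strict[of N] by auto
qed

text \<open>Hence every closed set is a finite union of irreducible closed subsets: split off a
  decomposition witnessing reducibility and recurse on the two strictly smaller parts.\<close>

lemma finite_irreducible_decomposition:
  fixes X :: "('v::finite \<Rightarrow> 'k::field) set"
  shows "zariski_closed X \<Longrightarrow> \<exists>\<C>. finite \<C> \<and>
    (\<forall>C\<in>\<C>. zariski_closed C \<and> zariski_irreducible C \<and> C \<subseteq> X) \<and> \<Union>\<C> = X"
proof (induction X rule: wf_induct[OF wf_closed_strict_subset])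
  case (1 X)
  show ?case
  proof (cases "X = {}")
    case True
    then show ?thesis by (intro exI[of _ "{}"]) auto
  next
    case nonempty: False
    show ?thesis
    proof (cases "zariski_irreducible X")
      case True
      then show ?thesis using "1.prems" by (intro exI[of _ "{X}"]) auto
    next
      case False
      then obtain A B where AB: "zariski_closed A" "zariski_closed B" "X \<subseteq> A \<union> B"
          "\<not> X \<subseteq> A" "\<not> X \<subseteq> B"
        using nonempty unfolding zariski_irreducible_def by blast
      have closed: "zariski_closed (X \<inter> A)" "zariski_closed (X \<inter> B)"
        using closed_Int "1.prems" AB by blast+
      then have smaller: "(X \<inter> A, X) \<in> closed_strict_subset" "(X \<inter> B, X) \<in> closed_strict_subset"
        unfolding closed_strict_subset_def using "1.prems" AB by auto
      obtain \<C>1 where \<C>1: "finite \<C>1"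
          "\<forall>C\<in>\<C>1. zariski_closed C \<and> zariski_irreducible C \<and> C \<subseteq> X \<inter> A" "\<Union>\<C>1 = X \<inter> A"
        using "1.IH"[rule_format, OF smaller(1) closed(1)] by blast
      obtain \<C>2 where \<C>2: "finite \<C>2"
          "\<forall>C\<in>\<C>2. zariski_closed C \<and> zariski_irreducible C \<and> C \<subseteq> X \<inter> B" "\<Union>\<C>2 = X \<inter> B"
        using "1.IH"[rule_format, OF smaller(2) closed(2)] by blast
      show ?thesis using \<C>1 \<C>2 AB(3) by (intro exI[of _ "\<C>1 \<union> \<C>2"]) auto
    qed
  qed
qed

lemma irreducible_subset_Union:
  fixes D :: "('v \<Rightarrow> 'k::field) set"
  shows "finite \<C> \<Longrightarrow> zariski_irreducible D \<Longrightarrow> \<forall>C\<in>\<C>. zariski_closed C \<Longrightarrow> D \<subseteq> \<Union>\<C> \<Longrightarrow>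
    \<exists>C\<in>\<C>. D \<subseteq> C"
proof (induction rule: finite_induct)
  case empty
  then show ?case unfolding zariski_irreducible_def by auto
next
  case (insert A \<C>)
  have "zariski_closed (\<Union>\<C>)" using insert closed_Union by auto
  moreover have "D \<subseteq> A \<union> \<Union>\<C>" using insert by auto
  ultimately have "D \<subseteq> A \<or> D \<subseteq> \<Union>\<C>" using insert.prems unfolding zariski_irreducible_def by auto
  then show ?case using insert by auto
qed

text \<open>Irreducible components versus an arbitrary finite irreducible decomposition \<open>\<C>\<close> of X:
  every component belongs to \<open>\<C>\<close>, and every irreducible closed subset of X lies in a
  component (a maximal member of \<open>\<C>\<close> containing it).\<close>

lemma component_in_decomposition:
  fixes X :: "('v \<Rightarrow> 'k::field) set"
  assumes \<C>: "finite \<C>" "\<forall>C\<in>\<C>. zariski_closed C \<and> zariski_irreducible C \<and> C \<subseteq> X" "\<Union>\<C> = X"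
    and K: "irreducible_component X K"
  shows "K \<in> \<C>"
proof -
  have K_props: "K \<subseteq> X" "zariski_irreducible K"
    and K_max: "\<And>D. D \<subseteq> X \<and> zariski_closed D \<and> zariski_irreducible D \<and> K \<subseteq> D \<Longrightarrow> D = K"
    using K unfolding irreducible_component_def by blast+
  have "\<forall>C\<in>\<C>. zariski_closed C" "K \<subseteq> \<Union>\<C>" using \<C>(2,3) K_props(1) by auto
  from irreducible_subset_Union[OF \<C>(1) K_props(2) this]
  obtain C where C: "C \<in> \<C>" "K \<subseteq> C" by blast
  then have "C = K" using \<C>(2) by (intro K_max) blast
  then show ?thesis using C(1) by simp
qed

lemma subset_component:
  fixes X :: "('v::finite \<Rightarrow> 'k::field) set"
  assumes X: "zariski_closed X" and D: "D \<subseteq> X" "zariski_irreducible D"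
  shows "\<exists>K. irreducible_component X K \<and> D \<subseteq> K"
proof -
  obtain \<C> where \<C>: "finite \<C>" "\<forall>C\<in>\<C>. zariski_closed C \<and> zariski_irreducible C \<and> C \<subseteq> X" "\<Union>\<C> = X"
    using finite_irreducible_decomposition[OF X] by blast
  have "\<forall>C\<in>\<C>. zariski_closed C" using \<C>(2) by blast
  then have in_\<C>: "\<exists>C\<in>\<C>. E \<subseteq> C" if "E \<subseteq> X" "zariski_irreducible E" for E
    using irreducible_subset_Union[OF \<C>(1) that(2)] \<C>(3) that(1) by blast
  obtain C0 where C0: "C0 \<in> \<C>" "D \<subseteq> C0" using in_\<C> D by blast
  define \<C>' where "\<C>' = {C\<in>\<C>. D \<subseteq> C}"
  obtain M where M: "M \<in> \<C>'" "C0 \<subseteq> M" "\<forall>C\<in>\<C>'. M \<subseteq> C \<longrightarrow> M = C"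
    using finite_has_maximal2[of \<C>' C0] \<C>(1) C0 unfolding \<C>'_def by auto
  have "irreducible_component X M"
    unfolding irreducible_component_def
  proof (intro conjI allI impI)
    show "M \<subseteq> X" "zariski_closed M" "zariski_irreducible M" using M(1) \<C>(2) unfolding \<C>'_def by auto
    fix E assume E: "E \<subseteq> X \<and> zariski_closed E \<and> zariski_irreducible E \<and> M \<subseteq> E"
    then obtain C where C: "C \<in> \<C>" "E \<subseteq> C" using in_\<C>[of E] by blast
    then have "C \<in> \<C>'" using M(1) E unfolding \<C>'_def by blast
    then have "M = C" using M(3) E C(2) by blast
    then show "E = M" using E C(2) by blast
  qed
  then show ?thesis using M(1) unfolding \<C>'_def by blast
qed

lemma finite_components:
  fixes X :: "('v::finite \<Rightarrow> 'k::field) set"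
  assumes "zariski_closed X"
  shows "finite {K. irreducible_component X K}"
proof -
  obtain \<C> where \<C>: "finite \<C>" "\<forall>C\<in>\<C>. zariski_closed C \<and> zariski_irreducible C \<and> C \<subseteq> X" "\<Union>\<C> = X"
    using finite_irreducible_decomposition[OF assms] by blast
  then have "{K. irreducible_component X K} \<subseteq> \<C>" using component_in_decomposition by blast
  then show ?thesis using \<C>(1) finite_subset by blast
qed

lemma Union_components:
  fixes X :: "('v::finite \<Rightarrow> 'k::field) set"
  assumes "zariski_closed X"
  shows "\<Union>{K. irreducible_component X K} = X"
proof -
  obtain \<C> where \<C>: "finite \<C>" "\<forall>C\<in>\<C>. zariski_closed C \<and> zariski_irreducible C \<and> C \<subseteq> X" "\<Union>\<C> = X"
    using finite_irreducible_decomposition[OF assms] by blast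
  have "\<forall>C\<in>\<C>. \<exists>K. irreducible_component X K \<and> C \<subseteq> K"
    using subset_component[OF assms] \<C>(2) by blast
  then have "X \<subseteq> \<Union>{K. irreducible_component X K}" using \<C>(3) by blast
  moreover have "\<Union>{K. irreducible_component X K} \<subseteq> X" by (auto simp: irreducible_component_def)
  ultimately show ?thesis by blast
qed

lemma irreducible_nonzero_product:
  fixes K :: "('v \<Rightarrow> 'k::field) set"
  assumes "zariski_irreducible K" "poly_fun p" "poly_fun q"
    "z1 \<in> K" "p z1 \<noteq> 0" "z2 \<in> K" "q z2 \<noteq> 0"
  shows "\<exists>z\<in>K. p z * q z \<noteq> 0"
proof (rule ccontr)
  assume "\<not> ?thesis"
  then have "K \<subseteq> zero_set {p} \<union> zero_set {q}" by auto
  moreover have "zariski_closed (zero_set {p})" "zariski_closed (zero_set {q})"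
    using zariski_closedI[of "{p}"] zariski_closedI[of "{q}"] assms(2,3) by simp_all
  ultimately have "K \<subseteq> zero_set {p} \<or> K \<subseteq> zero_set {q}"
    using assms(1) unfolding zariski_irreducible_def by blast
  then show False using assms(4-7) by auto
qed


text \<open>An algebraic action of a Zariski-connected algebraic group on a closed set X.\<close>

locale connected_action =
  fixes G :: "('u::finite \<Rightarrow> 'k::field) monoid"
    and X :: "('v::finite \<Rightarrow> 'k) set"
    and a :: "('u \<Rightarrow> 'k) \<Rightarrow> ('v \<Rightarrow> 'k) \<Rightarrow> ('v \<Rightarrow> 'k)"
  assumes group: "group G"
    and closed_G: "zariski_closed (carrier G)"
    and connected_G: "zariski_connected (carrier G)"
    and closed_X: "zariski_closed X"
    and action: "algebraic_action G X a"
begin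

lemma act_closed: "g \<in> carrier G \<Longrightarrow> x \<in> X \<Longrightarrow> a g x \<in> X"
  using action unfolding algebraic_action_def by blast

lemma act_one: "x \<in> X \<Longrightarrow> a \<one>\<^bsub>G\<^esub> x = x"
  using action unfolding algebraic_action_def by blast

lemma act_mult: "g \<in> carrier G \<Longrightarrow> h \<in> carrier G \<Longrightarrow> x \<in> X \<Longrightarrow> a (g \<otimes>\<^bsub>G\<^esub> h) x = a g (a h x)"
  using action unfolding algebraic_action_def by blast

lemma one_closed: "\<one>\<^bsub>G\<^esub> \<in> carrier G"
  using group by (rule monoid.one_closed[OF group.is_monoid])

lemma inv_closed: "g \<in> carrier G \<Longrightarrow> inv\<^bsub>G\<^esub> g \<in> carrier G"
  using group by (rule group.inv_closed)

lemma act_inv_left: "g \<in> carrier G \<Longrightarrow> x \<in> X \<Longrightarrow> a (inv\<^bsub>G\<^esub> g) (a g x) = x"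
  using act_mult[OF inv_closed] group.l_inv[OF group] act_one by metis

lemma act_inv_right: "g \<in> carrier G \<Longrightarrow> x \<in> X \<Longrightarrow> a g (a (inv\<^bsub>G\<^esub> g) x) = x"
  using act_mult[OF _ inv_closed] group.r_inv[OF group] act_one by metis

lemma action_poly_in_point:
  assumes "g \<in> carrier G"
  obtains P where "\<forall>j. poly_fun (P j)" "\<forall>x\<in>X. a g x = (\<lambda>j. P j x)"
proof -
  have "\<forall>j. \<exists>p. poly_fun p \<and> (\<forall>x\<in>X. a g x j = p (pt_pair g x))"
    using action assms unfolding algebraic_action_def morphism2_on_def by blast
  then obtain p where "\<forall>j. poly_fun (p j) \<and> (\<forall>x\<in>X. a g x j = p j (pt_pair g x))" by metis
  then show ?thesis using poly_fun_pair_left by (intro that[of "\<lambda>j x. p j (pt_pair g x)"]) auto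
qed

lemma action_poly_in_group:
  assumes "x \<in> X"
  obtains P where "\<forall>j. poly_fun (P j)" "\<forall>g\<in>carrier G. a g x = (\<lambda>j. P j g)"
proof -
  have "\<forall>j. \<exists>p. poly_fun p \<and> (\<forall>g\<in>carrier G. a g x j = p (pt_pair g x))"
    using action assms unfolding algebraic_action_def morphism2_on_def by blast
  then obtain p where "\<forall>j. poly_fun (p j) \<and> (\<forall>g\<in>carrier G. a g x j = p j (pt_pair g x))" by metis
  then show ?thesis using poly_fun_pair_right by (intro that[of "\<lambda>j g. p j (pt_pair g x)"]) auto
qed

definition act_preimage :: "('u \<Rightarrow> 'k) \<Rightarrow> ('v \<Rightarrow> 'k) set \<Rightarrow> ('v \<Rightarrow> 'k) set" where
  "act_preimage h C = {x \<in> X. a h x \<in> C}"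

lemma act_preimage_subset: "act_preimage h C \<subseteq> X"
  unfolding act_preimage_def by auto

lemma act_preimage_mono: "C \<subseteq> D \<Longrightarrow> act_preimage h C \<subseteq> act_preimage h D"
  unfolding act_preimage_def by auto

lemma act_preimage_inv: "g \<in> carrier G \<Longrightarrow> D \<subseteq> X \<Longrightarrow> act_preimage (inv\<^bsub>G\<^esub> g) (act_preimage g D) = D"
  unfolding act_preimage_def using act_closed act_inv_right inv_closed by auto

lemma act_preimage_inv': "g \<in> carrier G \<Longrightarrow> D \<subseteq> X \<Longrightarrow> act_preimage g (act_preimage (inv\<^bsub>G\<^esub> g) D) = D"
  unfolding act_preimage_def using act_closed act_inv_left inv_closed by auto

lemma closed_act_preimage:
  assumes h: "h \<in> carrier G" and C: "zariski_closed C"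
  shows "zariski_closed (act_preimage h C)"
proof -
  obtain P where P: "\<forall>j. poly_fun (P j)" "\<forall>x\<in>X. a h x = (\<lambda>j. P j x)"
    using h by (rule action_poly_in_point)
  have "act_preimage h C = X \<inter> {x. (\<lambda>j. P j x) \<in> C}" unfolding act_preimage_def using P(2) by auto
  then show ?thesis using closed_Int[OF closed_X closed_poly_preimage[OF C P(1)]] by simp
qed

text \<open>Translates of irreducible subsets, and hence of irreducible components, are again
  irreducible (components), since translation by h is a closed bijection of X with inverse
  translation by \<open>h\<inverse>\<close>.\<close>

lemma irreducible_act_preimage:
  assumes g: "g \<in> carrier G" and CX: "C \<subseteq> X" and irr: "zariski_irreducible C"
  shows "zariski_irreducible (act_preimage g C)"
  unfolding zariski_irreducible_def
proof (intro conjI allI impI)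
  obtain x where "x \<in> C" using irr unfolding zariski_irreducible_def by blast
  then have "a (inv\<^bsub>G\<^esub> g) x \<in> act_preimage g C"
    unfolding act_preimage_def using CX g act_closed act_inv_right inv_closed by auto
  then show "act_preimage g C \<noteq> {}" by blast
next
  fix A B assume A: "zariski_closed A" and B: "zariski_closed B" and sub: "act_preimage g C \<subseteq> A \<union> B"
  let ?g' = "inv\<^bsub>G\<^esub> g"
  have g': "?g' \<in> carrier G" using inv_closed[OF g] .
  have "C \<subseteq> act_preimage ?g' (act_preimage g C)" using act_preimage_inv[OF g CX] by simp
  also have "\<dots> \<subseteq> act_preimage ?g' A \<union> act_preimage ?g' B"
    using sub unfolding act_preimage_def by auto
  finally have "C \<subseteq> act_preimage ?g' A \<or> C \<subseteq> act_preimage ?g' B"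
    using irr closed_act_preimage[OF g' A] closed_act_preimage[OF g' B]
    unfolding zariski_irreducible_def by blast
  moreover have "act_preimage g (act_preimage ?g' E) \<subseteq> E" for E
    unfolding act_preimage_def using act_inv_left[OF g] by auto
  ultimately show "act_preimage g C \<subseteq> A \<or> act_preimage g C \<subseteq> B"
    using act_preimage_mono[of C _ g] by blast
qed

lemma component_act_preimage:
  assumes g: "g \<in> carrier G" and K: "irreducible_component X K"
  shows "irreducible_component X (act_preimage g K)"
proof -
  have K_props: "K \<subseteq> X" "zariski_closed K" "zariski_irreducible K"
    and K_max: "\<And>D. D \<subseteq> X \<and> zariski_closed D \<and> zariski_irreducible D \<and> K \<subseteq> D \<Longrightarrow> D = K"
    using K unfolding irreducible_component_def by blast+
  let ?g' = "inv\<^bsub>G\<^esub> g"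
  have g': "?g' \<in> carrier G" using inv_closed[OF g] .
  show ?thesis unfolding irreducible_component_def
  proof (intro conjI allI impI)
    show "act_preimage g K \<subseteq> X" by (rule act_preimage_subset)
    show "zariski_closed (act_preimage g K)" by (rule closed_act_preimage[OF g K_props(2)])
    show "zariski_irreducible (act_preimage g K)"
      by (rule irreducible_act_preimage[OF g K_props(1,3)])
    fix D assume D: "D \<subseteq> X \<and> zariski_closed D \<and> zariski_irreducible D \<and> act_preimage g K \<subseteq> D"
    have "K = act_preimage ?g' (act_preimage g K)" using act_preimage_inv[OF g K_props(1)] by simp
    also have "\<dots> \<subseteq> act_preimage ?g' D" using D by (intro act_preimage_mono) blast
    finally have "act_preimage ?g' D = K"
      using act_preimage_subset closed_act_preimage[OF g'] irreducible_act_preimage[OF g'] D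
      by (intro K_max) blast
    then show "D = act_preimage g K" using act_preimage_inv'[OF g] D by metis
  qed
qed

text \<open>The group elements mapping K into K'.  For closed K' this is closed in G: it is cut
  out by the polynomial conditions \<open>a h x \<in> K'\<close>, one for each point x of K.\<close>

definition maps_into :: "('v \<Rightarrow> 'k) set \<Rightarrow> ('v \<Rightarrow> 'k) set \<Rightarrow> ('u \<Rightarrow> 'k) set" where
  "maps_into K K' = {h \<in> carrier G. \<forall>x\<in>K. a h x \<in> K'}"

lemma closed_maps_into:
  assumes KX: "K \<subseteq> X" and K': "zariski_closed K'"
  shows "zariski_closed (maps_into K K')"
proof -
  have "\<forall>x\<in>K. \<exists>P. (\<forall>j. poly_fun (P j)) \<and> (\<forall>g\<in>carrier G. a g x = (\<lambda>j. P j g))"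
    using action_poly_in_group KX by (metis subsetD)
  then obtain P where P: "\<forall>x\<in>K. (\<forall>j. poly_fun (P x j)) \<and> (\<forall>g\<in>carrier G. a g x = (\<lambda>j. P x j g))"
    by metis
  have "maps_into K K' = carrier G \<inter> \<Inter>((\<lambda>x. {h. (\<lambda>j. P x j h) \<in> K'}) ` K)"
    unfolding maps_into_def using P by auto
  moreover have "zariski_closed (\<Inter>((\<lambda>x. {h. (\<lambda>j. P x j h) \<in> K'}) ` K))"
    using closed_poly_preimage[OF K'] P by (intro closed_Inter) blast
  ultimately show ?thesis using closed_Int[OF closed_G] by simp
qed

text \<open>For a component K, every h maps K into exactly one component, namely the preimage of K
  under \<open>h\<inverse>\<close>; so the sets \<open>maps_into K K'\<close> partition G.\<close>

lemma maps_into_cover: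
  assumes K: "irreducible_component X K" and h: "h \<in> carrier G"
  shows "\<exists>K'. irreducible_component X K' \<and> h \<in> maps_into K K'"
proof -
  have "K \<subseteq> X" using K unfolding irreducible_component_def by blast
  then have "h \<in> maps_into K (act_preimage (inv\<^bsub>G\<^esub> h) K)"
    unfolding maps_into_def act_preimage_def using h act_closed act_inv_left by auto
  then show ?thesis using component_act_preimage[OF inv_closed[OF h] K] by blast
qed

lemma maps_into_unique:
  assumes K: "irreducible_component X K" and K': "irreducible_component X K'"
    and h: "h \<in> maps_into K K'"
  shows "K' = act_preimage (inv\<^bsub>G\<^esub> h) K"
proof -
  have hG: "h \<in> carrier G" using h unfolding maps_into_def by auto
  have KX: "K \<subseteq> X" and K'X: "K' \<subseteq> X" using K K' unfolding irreducible_component_def by auto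
  have "K \<subseteq> act_preimage h K'" using h KX unfolding maps_into_def act_preimage_def by auto
  then have "act_preimage h K' = K"
    using component_act_preimage[OF hG K'] K unfolding irreducible_component_def by blast
  then show ?thesis using act_preimage_inv[OF hG K'X] by simp
qed

text \<open>Components are G-stable: \<open>maps_into K K\<close> contains the identity and is a member of
  a finite partition of the connected G into closed sets, so it is all of G.\<close>

lemma component_stable:
  assumes K: "irreducible_component X K" and g: "g \<in> carrier G" and x: "x \<in> K"
  shows "a g x \<in> K"
proof -
  define \<K> where "\<K> = {K. irreducible_component X K}"
  have KX: "K \<subseteq> X" using K unfolding irreducible_component_def by blast
  have closed: "zariski_closed (maps_into K K')" if "K' \<in> \<K>" for K'
    using closed_maps_into[OF KX] that unfolding \<K>_def irreducible_component_def by blast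
  define B where "B = (\<Union>K'\<in>\<K> - {K}. maps_into K K')"
  have "zariski_closed B" unfolding B_def
    using finite_components[OF closed_X] closed unfolding \<K>_def by (intro closed_Union) auto
  moreover have "carrier G \<subseteq> maps_into K K \<union> B"
    using maps_into_cover[OF K] unfolding B_def \<K>_def by blast
  moreover have "maps_into K K \<inter> B \<inter> carrier G = {}"
    using maps_into_unique[OF K] K unfolding B_def \<K>_def by blast
  moreover have "\<one>\<^bsub>G\<^esub> \<in> maps_into K K"
    unfolding maps_into_def using KX act_one one_closed by auto
  ultimately have "B \<inter> carrier G = {}"
    using connected_G closed[of K] K one_closed unfolding zariski_connected_def \<K>_def by blast
  then have "g \<in> maps_into K K" using maps_into_cover[OF K g] g unfolding B_def \<K>_def by blast
  then show ?thesis using x unfolding maps_into_def by blast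
qed

end

text \<open>Elementary facts about the coordinate ring k[Y] (restrictions of polynomial functions to Y,
  undefined outside Y) and its ideals.\<close>

lemma coord_ringE:
  assumes "f \<in> coord_ring Y"
  obtains p where "poly_fun p" "f = restrict p Y"
  using assms unfolding coord_ring_def by blast

lemma coord_ring_poly: "poly_fun p \<Longrightarrow> restrict p Y \<in> coord_ring Y"
  unfolding coord_ring_def by blast

lemma coord_ring_eqI:
  assumes "f \<in> coord_ring Y" "g \<in> coord_ring Y" "\<And>y. y \<in> Y \<Longrightarrow> f y = g y"
  shows "f = g"
proof
  fix y show "f y = g y"
    using assms by (cases "y \<in> Y") (auto elim!: coord_ringE)
qed

lemma coord_zero_in: "coord_zero Y \<in> coord_ring Y"
  unfolding coord_zero_def by (rule coord_ring_poly) (rule poly_fun.pf_const)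

lemma coord_ring_nonzero:
  assumes "f \<in> coord_ring Y" "f \<noteq> coord_zero Y"
  shows "\<exists>y\<in>Y. f y \<noteq> 0"
proof (rule ccontr)
  assume "\<not> (\<exists>y\<in>Y. f y \<noteq> 0)"
  then have "f = coord_zero Y"
    by (intro coord_ring_eqI[OF assms(1) coord_zero_in]) (simp add: coord_zero_def)
  then show False using assms(2) by simp
qed

lemma coord_ring_add:
  assumes "f \<in> coord_ring Y" "g \<in> coord_ring Y"
  shows "restrict (\<lambda>x. f x + g x) Y \<in> coord_ring Y"
proof -
  obtain p q where pq: "poly_fun p" "f = restrict p Y" "poly_fun q" "g = restrict q Y"
    using assms by (meson coord_ringE)
  have "restrict (\<lambda>x. f x + g x) Y = restrict (\<lambda>x. p x + q x) Y" unfolding pq by (rule ext) simp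
  then show ?thesis using coord_ring_poly[OF poly_fun.pf_add[OF pq(1,3)]] by simp
qed

lemma coord_ring_mult:
  assumes "f \<in> coord_ring Y" "g \<in> coord_ring Y"
  shows "restrict (\<lambda>x. f x * g x) Y \<in> coord_ring Y"
proof -
  obtain p q where pq: "poly_fun p" "f = restrict p Y" "poly_fun q" "g = restrict q Y"
    using assms by (meson coord_ringE)
  have "restrict (\<lambda>x. f x * g x) Y = restrict (\<lambda>x. p x * q x) Y" unfolding pq by (rule ext) simp
  then show ?thesis using coord_ring_poly[OF poly_fun.pf_mult[OF pq(1,3)]] by simp
qed

lemma coord_ring_restrict:
  assumes "K \<subseteq> X" "f \<in> coord_ring X"
  shows "restrict f K \<in> coord_ring K"
proof -
  obtain p where p: "poly_fun p" "f = restrict p X" using assms(2) by (rule coord_ringE)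
  have "restrict f K = restrict p K" unfolding p using assms(1) by (intro ext) auto
  then show ?thesis using coord_ring_poly[OF p(1)] by simp
qed

lemma coord_ideal_subset: "coord_ideal Y I \<Longrightarrow> I \<subseteq> coord_ring Y"
  unfolding coord_ideal_def by blast

lemma coord_ideal_zero: "coord_ideal Y I \<Longrightarrow> coord_zero Y \<in> I"
  unfolding coord_ideal_def by blast

lemma coord_ideal_add: "coord_ideal Y I \<Longrightarrow> f \<in> I \<Longrightarrow> h \<in> I \<Longrightarrow> restrict (\<lambda>x. f x + h x) Y \<in> I"
  unfolding coord_ideal_def by blast

lemma coord_ideal_mult:
  "coord_ideal Y I \<Longrightarrow> f \<in> I \<Longrightarrow> h \<in> coord_ring Y \<Longrightarrow> restrict (\<lambda>x. h x * f x) Y \<in> I"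
  unfolding coord_ideal_def by blast

context connected_action
begin

lemma translate_coord_ring:
  assumes g: "g \<in> carrier G" and f: "f \<in> coord_ring X"
  shows "translate_fun G X a g f \<in> coord_ring X"
proof -
  obtain p where p: "poly_fun p" "f = restrict p X" using f by (rule coord_ringE)
  have g': "inv\<^bsub>G\<^esub> g \<in> carrier G" using inv_closed[OF g] .
  obtain P where P: "\<forall>j. poly_fun (P j)" "\<forall>x\<in>X. a (inv\<^bsub>G\<^esub> g) x = (\<lambda>j. P j x)"
    using g' by (rule action_poly_in_point)
  have "translate_fun G X a g f = restrict (\<lambda>y. p (\<lambda>j. P j y)) X"
    unfolding translate_fun_def p(2) using act_closed[OF g'] P(2) by (intro ext) auto
  then show ?thesis using coord_ring_poly[OF poly_fun_subst[OF p(1) P(1)]] by simp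
qed

lemma zero_invariant:
  assumes I: "coord_ideal Y I" and stable: "\<forall>g\<in>carrier G. \<forall>y\<in>Y. a g y \<in> Y"
  shows "coord_zero Y \<in> invariants G Y a I"
  unfolding invariants_def
proof (intro CollectI conjI ballI)
  show "coord_zero Y \<in> I" using coord_ideal_zero[OF I] .
  fix g assume "g \<in> carrier G"
  then have "\<forall>y\<in>Y. a (inv\<^bsub>G\<^esub> g) y \<in> Y" using stable inv_closed by blast
  then show "translate_fun G Y a g (coord_zero Y) = coord_zero Y"
    unfolding translate_fun_def coord_zero_def by (intro ext) auto
qed

end

locale component_split = connected_action G X a
  for G :: "('u::finite \<Rightarrow> 'k::field) monoid" and X :: "('v::finite \<Rightarrow> 'k) set" and a +
  fixes K D :: "('v \<Rightarrow> 'k) set" and t :: "('v \<Rightarrow> 'k) \<Rightarrow> 'k"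
  assumes component: "irreducible_component X K"
    and X_split: "X = K \<union> D"
    and D_subset: "D \<subseteq> X"
    and D_stable: "\<forall>g\<in>carrier G. \<forall>y\<in>D. a g y \<in> D"
    and t_poly: "poly_fun t"
    and t_vanishes: "\<forall>y\<in>D. t y = 0"
    and t_nonzero: "\<exists>z\<in>K. t z \<noteq> 0"

context connected_action
begin

text \<open>D is closed as a finite union of components,
  and D does not contain K (otherwise K would lie in another component), so an equation t of D
  is nonzero somewhere on K.\<close>

lemma component_split_exists:
  assumes K: "irreducible_component X K"
  shows "\<exists>D t. component_split G X a K D t"
proof -
  define \<K> where "\<K> = {K. irreducible_component X K}"
  have K_props: "K \<subseteq> X" "zariski_irreducible K"
    and K_max: "\<And>D. D \<subseteq> X \<and> zariski_closed D \<and> zariski_irreducible D \<and> K \<subseteq> D \<Longrightarrow> D = K"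
    using K unfolding irreducible_component_def by blast+
  have comps: "\<forall>C\<in>\<K>. zariski_closed C \<and> zariski_irreducible C \<and> C \<subseteq> X"
    unfolding \<K>_def irreducible_component_def by blast
  define D where "D = \<Union>(\<K> - {K})"
  have "zariski_closed D"
    unfolding D_def using finite_components[OF closed_X] comps unfolding \<K>_def
    by (intro closed_Union) auto
  then obtain T where T: "\<forall>p\<in>T. poly_fun p" "D = zero_set T" by (rule zariski_closedE)
  have split: "X = K \<union> D" using Union_components[OF closed_X] K_props(1) unfolding D_def \<K>_def by blast
  have D_subset: "D \<subseteq> X" unfolding D_def using comps by blast
  have D_stable: "\<forall>g\<in>carrier G. \<forall>y\<in>D. a g y \<in> D"
    unfolding D_def \<K>_def using component_stable by blast
  have "\<not> K \<subseteq> D"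
  proof
    assume "K \<subseteq> D"
    then obtain K' where "K' \<in> \<K> - {K}" "K \<subseteq> K'"
      using irreducible_subset_Union[of "\<K> - {K}" K] finite_components[OF closed_X] K_props(2) comps
      unfolding D_def \<K>_def by blast
    then show False using K_max comps by blast
  qed
  then obtain z t where "z \<in> K" "t \<in> T" "t z \<noteq> 0" using T(2) by blast
  then have "component_split G X a K D t"
    using connected_action_axioms K split D_subset D_stable T
    unfolding component_split_def component_split_axioms_def by blast
  then show ?thesis by blast
qed

end

context component_split
begin

lemma K_subset: "K \<subseteq> X"
  using component unfolding irreducible_component_def by blast

lemma K_stable: "g \<in> carrier G \<Longrightarrow> y \<in> K \<Longrightarrow> a g y \<in> K"
  using component_stable[OF component] .

lemma restrict_translate:
  assumes g: "g \<in> carrier G"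
  shows "translate_fun G K a g (restrict F K) = restrict (translate_fun G X a g F) K"
  unfolding translate_fun_def using K_stable[OF inv_closed[OF g]] K_subset by (intro ext) auto

lemma translate_vanishes_D:
  assumes g: "g \<in> carrier G" and F: "\<forall>y\<in>D. F y = 0"
  shows "\<forall>y\<in>D. translate_fun G X a g F y = 0"
  unfolding translate_fun_def using D_stable inv_closed[OF g] F D_subset by auto

lemma invariant_iff_restrict:
  assumes F: "F \<in> coord_ring X" "\<forall>y\<in>D. F y = 0" and g: "g \<in> carrier G"
  shows "translate_fun G X a g F = F \<longleftrightarrow> translate_fun G K a g (restrict F K) = restrict F K"
proof
  assume "translate_fun G X a g F = F"
  then show "translate_fun G K a g (restrict F K) = restrict F K" using restrict_translate[OF g] by simp
next
  assume inv_K: "translate_fun G K a g (restrict F K) = restrict F K"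
  show "translate_fun G X a g F = F"
  proof (rule coord_ring_eqI[OF translate_coord_ring[OF g F(1)] F(1)])
    fix y assume y: "y \<in> X"
    show "translate_fun G X a g F y = F y"
    proof (cases "y \<in> K")
      case True
      then show ?thesis using fun_cong[OF inv_K, of y] restrict_translate[OF g] by simp
    next
      case False
      then have "y \<in> D" using y X_split by blast
      then show ?thesis using translate_vanishes_D[OF g F(2)] F(2) by simp
    qed
  qed
qed

lemma nonzero_iff_restrict:
  assumes F: "F \<in> coord_ring X" "\<forall>y\<in>D. F y = 0"
  shows "F \<noteq> coord_zero X \<longleftrightarrow> restrict F K \<noteq> coord_zero K"
proof
  assume "F \<noteq> coord_zero X"
  then obtain y where "y \<in> X" "F y \<noteq> 0" using coord_ring_nonzero[OF F(1)] by blast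
  then have "y \<in> K" using X_split F(2) by blast
  then show "restrict F K \<noteq> coord_zero K"
    using \<open>F y \<noteq> 0\<close> unfolding coord_zero_def by (metis restrict_apply')
next
  assume nonzero: "restrict F K \<noteq> coord_zero K"
  show "F \<noteq> coord_zero X"
  proof
    assume "F = coord_zero X"
    then have "restrict F K = coord_zero K" unfolding coord_zero_def using K_subset by (intro ext) auto
    then show False using nonzero by simp
  qed
qed

text \<open>Multiplying by t kills D; by irreducibility of K it keeps nonzero on K every function
  that is nonzero somewhere on K.\<close>

definition times_t :: "(('v \<Rightarrow> 'k) \<Rightarrow> 'k) \<Rightarrow> (('v \<Rightarrow> 'k) \<Rightarrow> 'k)" where
  "times_t h = restrict (\<lambda>x. restrict t X x * h x) X"

lemma times_t_coord_ring: "h \<in> coord_ring X \<Longrightarrow> times_t h \<in> coord_ring X"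
  unfolding times_t_def by (rule coord_ring_mult[OF coord_ring_poly[OF t_poly]])

lemma times_t_vanishes: "\<forall>y\<in>D. times_t h y = 0"
  unfolding times_t_def using t_vanishes D_subset by auto

lemma times_t_nonzero:
  assumes h: "h \<in> coord_ring X" and z: "z \<in> K" "h z \<noteq> 0"
  shows "restrict (times_t h) K \<noteq> coord_zero K"
proof -
  obtain p where p: "poly_fun p" "h = restrict p X" using h by (rule coord_ringE)
  obtain z1 where "z1 \<in> K" "t z1 \<noteq> 0" using t_nonzero by blast
  moreover have "zariski_irreducible K" using component unfolding irreducible_component_def by blast
  moreover have "p z \<noteq> 0" using z p(2) K_subset by auto
  ultimately obtain y where "y \<in> K" "t y * p y \<noteq> 0"
    using irreducible_nonzero_product[OF _ t_poly p(1) _ _ z(1)] by blast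
  then have nonzero: "restrict (times_t h) K y \<noteq> 0"
    unfolding times_t_def p(2) using K_subset by auto
  show ?thesis
  proof
    assume "restrict (times_t h) K = coord_zero K"
    then have "restrict (times_t h) K y = 0" using \<open>y \<in> K\<close> unfolding coord_zero_def by simp
    then show False using \<open>restrict (times_t h) K y \<noteq> 0\<close> by simp
  qed
qed

end

context component_split
begin

definition extend_ideal :: "(('v \<Rightarrow> 'k) \<Rightarrow> 'k) set \<Rightarrow> (('v \<Rightarrow> 'k) \<Rightarrow> 'k) set" where
  "extend_ideal J = {F \<in> coord_ring X. restrict F K \<in> J \<and> (\<forall>y\<in>D. F y = 0)}"

definition restrict_ideal :: "(('v \<Rightarrow> 'k) \<Rightarrow> 'k) set \<Rightarrow> (('v \<Rightarrow> 'k) \<Rightarrow> 'k) set" where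
  "restrict_ideal I = {restrict F K | F. F \<in> I \<and> (\<forall>y\<in>D. F y = 0)}"

lemma restrict_restrict_K: "restrict (restrict f X) K = restrict f K"
  using K_subset by (intro ext) auto

lemma coord_ideal_extend:
  assumes J: "coord_ideal K J"
  shows "coord_ideal X (extend_ideal J)"
  unfolding coord_ideal_def
proof (intro conjI ballI)
  show "extend_ideal J \<subseteq> coord_ring X" unfolding extend_ideal_def by blast
  have "restrict (coord_zero X) K = coord_zero K" unfolding coord_zero_def by (rule restrict_restrict_K)
  then show "coord_zero X \<in> extend_ideal J"
    unfolding extend_ideal_def using coord_zero_in coord_ideal_zero[OF J] D_subset
    by (auto simp: coord_zero_def)
next
  fix f h assume f: "f \<in> extend_ideal J" and h: "h \<in> extend_ideal J"
  have "restrict (restrict (\<lambda>x. f x + h x) X) K = restrict (\<lambda>x. restrict f K x + restrict h K x) K"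
    using K_subset by (intro ext) auto
  moreover have "restrict (\<lambda>x. restrict f K x + restrict h K x) K \<in> J"
    using coord_ideal_add[OF J] f h unfolding extend_ideal_def by blast
  moreover have "restrict (\<lambda>x. f x + h x) X \<in> coord_ring X"
    using coord_ring_add f h unfolding extend_ideal_def by blast
  ultimately show "restrict (\<lambda>x. f x + h x) X \<in> extend_ideal J"
    using f h D_subset unfolding extend_ideal_def by auto
next
  fix f h assume f: "f \<in> extend_ideal J" and h: "h \<in> coord_ring X"
  have "restrict (restrict (\<lambda>x. h x * f x) X) K = restrict (\<lambda>x. restrict h K x * restrict f K x) K"
    using K_subset by (intro ext) auto
  moreover have "restrict (\<lambda>x. restrict h K x * restrict f K x) K \<in> J"
    using coord_ideal_mult[OF J] coord_ring_restrict[OF K_subset h] f unfolding extend_ideal_def by blast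
  moreover have "restrict (\<lambda>x. h x * f x) X \<in> coord_ring X"
    using coord_ring_mult[OF h] f unfolding extend_ideal_def by blast
  ultimately show "restrict (\<lambda>x. h x * f x) X \<in> extend_ideal J"
    using f D_subset unfolding extend_ideal_def by auto
qed

lemma G_stable_extend:
  assumes J: "G_stable G K a J"
  shows "G_stable G X a (extend_ideal J)"
  unfolding G_stable_def
proof (intro ballI)
  fix g F assume g: "g \<in> carrier G" and F: "F \<in> extend_ideal J"
  have "translate_fun G K a g (restrict F K) \<in> J"
    using J g F unfolding G_stable_def extend_ideal_def by blast
  then show "translate_fun G X a g F \<in> extend_ideal J"
    using translate_coord_ring[OF g] translate_vanishes_D[OF g] restrict_translate[OF g] F
    unfolding extend_ideal_def by auto
qed

lemma coord_ideal_restrict: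
  assumes I: "coord_ideal X I"
  shows "coord_ideal K (restrict_ideal I)"
  unfolding coord_ideal_def
proof (intro conjI ballI)
  show "restrict_ideal I \<subseteq> coord_ring K"
    unfolding restrict_ideal_def using coord_ring_restrict[OF K_subset] coord_ideal_subset[OF I] by blast
  have "restrict (coord_zero X) K = coord_zero K" unfolding coord_zero_def by (rule restrict_restrict_K)
  moreover have "\<forall>y\<in>D. coord_zero X y = 0" using D_subset unfolding coord_zero_def by auto
  ultimately show "coord_zero K \<in> restrict_ideal I"
    unfolding restrict_ideal_def using coord_ideal_zero[OF I]
    by (intro CollectI exI[of _ "coord_zero X"]) auto
next
  fix \<phi>1 \<phi>2 assume "\<phi>1 \<in> restrict_ideal I" "\<phi>2 \<in> restrict_ideal I"
  then obtain F1 F2 where F: "F1 \<in> I" "\<forall>y\<in>D. F1 y = 0" "\<phi>1 = restrict F1 K"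
      "F2 \<in> I" "\<forall>y\<in>D. F2 y = 0" "\<phi>2 = restrict F2 K"
    unfolding restrict_ideal_def by blast
  have "restrict (\<lambda>x. \<phi>1 x + \<phi>2 x) K = restrict (restrict (\<lambda>x. F1 x + F2 x) X) K"
    unfolding F(3,6) using K_subset by (intro ext) auto
  moreover have "restrict (\<lambda>x. F1 x + F2 x) X \<in> I" using coord_ideal_add[OF I F(1,4)] .
  moreover have "\<forall>y\<in>D. restrict (\<lambda>x. F1 x + F2 x) X y = 0" using F(2,5) D_subset by auto
  ultimately show "restrict (\<lambda>x. \<phi>1 x + \<phi>2 x) K \<in> restrict_ideal I"
    unfolding restrict_ideal_def by blast
next
  fix \<phi> h assume "\<phi> \<in> restrict_ideal I" and h: "h \<in> coord_ring K"
  then obtain F where F: "F \<in> I" "\<forall>y\<in>D. F y = 0" "\<phi> = restrict F K"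
    unfolding restrict_ideal_def by blast
  obtain s where s: "poly_fun s" "h = restrict s K" using h by (rule coord_ringE)
  have "restrict (\<lambda>x. h x * \<phi> x) K = restrict (restrict (\<lambda>x. restrict s X x * F x) X) K"
    unfolding F(3) s(2) using K_subset by (intro ext) auto
  moreover have "restrict (\<lambda>x. restrict s X x * F x) X \<in> I"
    using coord_ideal_mult[OF I F(1) coord_ring_poly[OF s(1)]] .
  moreover have "\<forall>y\<in>D. restrict (\<lambda>x. restrict s X x * F x) X y = 0" using F(2) D_subset by auto
  ultimately show "restrict (\<lambda>x. h x * \<phi> x) K \<in> restrict_ideal I"
    unfolding restrict_ideal_def by blast
qed

lemma G_stable_restrict:
  assumes I: "G_stable G X a I"
  shows "G_stable G K a (restrict_ideal I)"
  unfolding G_stable_def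
proof (intro ballI)
  fix g \<phi> assume g: "g \<in> carrier G" and "\<phi> \<in> restrict_ideal I"
  then obtain F where F: "F \<in> I" "\<forall>y\<in>D. F y = 0" "\<phi> = restrict F K"
    unfolding restrict_ideal_def by blast
  have "translate_fun G X a g F \<in> I" using I g F(1) unfolding G_stable_def by blast
  then show "translate_fun G K a g \<phi> \<in> restrict_ideal I"
    using translate_vanishes_D[OF g F(2)] restrict_translate[OF g] F(3)
    unfolding restrict_ideal_def by blast
qed

text \<open>Observability descends from X to K: extend a nonzero G-stable ideal J of k[K]; it contains
  \<open>t \<cdot> q\<close> for a nonzero element q|K of J, so it is nonzero, and the restriction of a nonzero
  invariant of the extension is a nonzero invariant of J.\<close>

lemma observable_component:
  assumes obs: "observable G X a"
  shows "observable G K a"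
  unfolding observable_def
proof (intro allI impI)
  fix J assume "coord_ideal K J \<and> G_stable G K a J \<and> J \<noteq> {coord_zero K}"
  then have J: "coord_ideal K J" "G_stable G K a J" "J \<noteq> {coord_zero K}" by auto
  obtain j where j: "j \<in> J" "j \<noteq> coord_zero K" using coord_ideal_zero[OF J(1)] J(3) by blast
  obtain q where q: "poly_fun q" "j = restrict q K"
    using coord_ideal_subset[OF J(1)] j(1) by (blast elim: coord_ringE)
  obtain z where z: "z \<in> K" "j z \<noteq> 0" using coord_ring_nonzero coord_ideal_subset[OF J(1)] j by blast
  define F where "F = times_t (restrict q X)"
  have F_X: "F \<in> coord_ring X" unfolding F_def by (rule times_t_coord_ring[OF coord_ring_poly[OF q(1)]])
  have F_D: "\<forall>y\<in>D. F y = 0" unfolding F_def by (rule times_t_vanishes)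
  have "restrict q X z \<noteq> 0" using z q(2) K_subset by auto
  then have "restrict F K \<noteq> coord_zero K"
    unfolding F_def by (rule times_t_nonzero[OF coord_ring_poly[OF q(1)] z(1)])
  then have F_nonzero: "F \<noteq> coord_zero X" using nonzero_iff_restrict[OF F_X F_D] by blast
  have "restrict F K = restrict (\<lambda>x. restrict t K x * j x) K"
    unfolding F_def times_t_def q(2) using K_subset by (intro ext) auto
  then have "F \<in> extend_ideal J"
    using coord_ideal_mult[OF J(1) j(1) coord_ring_poly[OF t_poly]] F_X F_D
    unfolding extend_ideal_def by simp
  then have "extend_ideal J \<noteq> {coord_zero X}" using F_nonzero by blast
  then have "invariants G X a (extend_ideal J) \<noteq> {coord_zero X}"
    using obs coord_ideal_extend[OF J(1)] G_stable_extend[OF J(2)] unfolding observable_def by blast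
  moreover have "coord_zero X \<in> invariants G X a (extend_ideal J)"
    using zero_invariant[OF coord_ideal_extend[OF J(1)]] act_closed by blast
  ultimately obtain F' where F': "F' \<in> invariants G X a (extend_ideal J)" "F' \<noteq> coord_zero X" by blast
  then have F'_ext: "F' \<in> coord_ring X" "restrict F' K \<in> J" "\<forall>y\<in>D. F' y = 0"
    unfolding invariants_def extend_ideal_def by auto
  have "restrict F' K \<in> invariants G K a J"
    using F' F'_ext invariant_iff_restrict unfolding invariants_def by auto
  moreover have "restrict F' K \<noteq> coord_zero K" using nonzero_iff_restrict F'_ext F'(2) by blast
  ultimately show "invariants G K a J \<noteq> {coord_zero K}" by blast
qed

text \<open>Conversely, a G-stable ideal I of k[X] containing an element f that is nonzero somewhere
  on K has a nonzero invariant if K is observable: restrict I to K (it contains the restriction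
  of \<open>t \<cdot> f\<close>, which is nonzero), and extend a nonzero invariant by zero on D.\<close>

lemma observable_from_component:
  assumes obs: "observable G K a" and I: "coord_ideal X I" "G_stable G X a I"
    and f: "f \<in> I" "z \<in> K" "f z \<noteq> 0"
  shows "invariants G X a I \<noteq> {coord_zero X}"
proof -
  have f_X: "f \<in> coord_ring X" using coord_ideal_subset[OF I(1)] f(1) by blast
  have "times_t f \<in> I" unfolding times_t_def by (rule coord_ideal_mult[OF I(1) f(1) coord_ring_poly[OF t_poly]])
  then have "restrict (times_t f) K \<in> restrict_ideal I"
    using times_t_vanishes unfolding restrict_ideal_def by blast
  moreover have "restrict (times_t f) K \<noteq> coord_zero K" by (rule times_t_nonzero[OF f_X f(2,3)])
  ultimately have "restrict_ideal I \<noteq> {coord_zero K}" by blast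
  then have "invariants G K a (restrict_ideal I) \<noteq> {coord_zero K}"
    using obs coord_ideal_restrict[OF I(1)] G_stable_restrict[OF I(2)] unfolding observable_def by blast
  moreover have "coord_zero K \<in> invariants G K a (restrict_ideal I)"
    using zero_invariant[OF coord_ideal_restrict[OF I(1)]] K_stable by blast
  ultimately obtain \<phi> where \<phi>: "\<phi> \<in> invariants G K a (restrict_ideal I)" "\<phi> \<noteq> coord_zero K"
    by blast
  then obtain F where F: "F \<in> I" "\<forall>y\<in>D. F y = 0" "\<phi> = restrict F K"
    unfolding invariants_def restrict_ideal_def by blast
  have F_X: "F \<in> coord_ring X" using coord_ideal_subset[OF I(1)] F(1) by blast
  have "F \<in> invariants G X a I"
    using \<phi>(1) F F_X invariant_iff_restrict unfolding invariants_def by auto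
  moreover have "F \<noteq> coord_zero X" using nonzero_iff_restrict[OF F_X F(2)] \<phi>(2) F(3) by blast
  ultimately show ?thesis by blast
qed

end
context connected_action
begin

text \<open>The theorem inside the locale.  For the converse direction, a nonzero element f of a
  G-stable ideal is nonzero at some point of X, which lies in some component K.\<close>

theorem observable_iff_components:
  "observable G X a \<longleftrightarrow> (\<forall>K. irreducible_component X K \<longrightarrow> observable G K a)"
proof (intro iffI allI impI)
  fix K assume "observable G X a" "irreducible_component X K"
  then show "observable G K a"
    using component_split_exists component_split.observable_component by blast
next
  assume obs: "\<forall>K. irreducible_component X K \<longrightarrow> observable G K a"
  show "observable G X a"
    unfolding observable_def
  proof (intro allI impI)
    fix I assume "coord_ideal X I \<and> G_stable G X a I \<and> I \<noteq> {coord_zero X}"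
    then have I: "coord_ideal X I" "G_stable G X a I" "I \<noteq> {coord_zero X}" by auto
    obtain f where f: "f \<in> I" "f \<noteq> coord_zero X" using coord_ideal_zero[OF I(1)] I(3) by blast
    then obtain z where z: "z \<in> X" "f z \<noteq> 0"
      using coord_ring_nonzero coord_ideal_subset[OF I(1)] by blast
    then obtain K where K: "irreducible_component X K" "z \<in> K" using Union_components[OF closed_X] by blast
    then obtain D t where "component_split G X a K D t" using component_split_exists by blast
    then show "invariants G X a I \<noteq> {coord_zero X}"
      using component_split.observable_from_component obs K I(1,2) f(1) z(2) by blast
  qed
qed

end

theorem lemma3p1:
  fixes G :: "('u::finite \<Rightarrow> 'k::field) monoid"
    and X :: "('v::finite \<Rightarrow> 'k) set"
    and a :: "('u \<Rightarrow> 'k) \<Rightarrow> ('v \<Rightarrow> 'k) \<Rightarrow> ('v \<Rightarrow> 'k)"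
  assumes "alg_closed TYPE('k)"
    and "affine_algebraic_group G"
    and "zariski_connected (carrier G)"
    and "zariski_closed X"
    and "algebraic_action G X a"
  shows "observable G X a \<longleftrightarrow> (\<forall>C. irreducible_component X C \<longrightarrow> observable G C a)"
proof -
  have "connected_action G X a"
    using assms(2-5) unfolding connected_action_def affine_algebraic_group_def by blast
  then show ?thesis by (rule connected_action.observable_iff_components)
qed

end
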